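(* Let $\mathcal{H}$ be a complex Hilbert space and let $A\in\mathcal{B}(\mathcal{H})$ satisfy $mI\le A\le MI$ for some scalars $0<m<M$. Then the following assertions are equivalent (in each, $\Phi$ ranges over all unital positive linear maps $\Phi:\mathcal{B}(\mathcal{H})\to\mathcal{B}(\mathcal{K})$, $\mathcal K$ a complex Hilbert space): (i) $\Phi(A^{-1})\le\left(\frac{M+m}{2\sqrt{Mm}}\right)^2\Phi(A)^{-1}$ for every such $\Phi$; (ii) $\langle\Phi(A^{-1})x,x\rangle\le\left(\frac{M+m}{2\sqrt{Mm}}\right)^2\langle\Phi(A)x,x\rangle^{-1}$ for every such $\Phi$ and every unit vector $x\in\mathcal{K}$; (iii) $\Phi(A^{-1})\sharp\Phi(A)\le\frac{M+m}{2\sqrt{Mm}}I$ for every such $\Phi$; (iv) $\Phi(A^2)\le\left(\frac{M+m}{2\sqrt{Mm}}\right)^2\Phi(A)^2$ for every such $\Phi$.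
   Context: $\mathcal{B}(\mathcal{H})$ denotes the bounded linear operators on $\mathcal{H}$; $\le$ is the Löwner order. A linear map $\Phi:\mathcal{B}(\mathcal{H})\to\mathcal{B}(\mathcal{K})$ is positive if it maps positive operators to positive operators, and unital if $\Phi(I)=I$. For positive invertible operators $X,Y$, the geometric mean is $X\sharp Y=X^{1/2}\left(X^{-1/2}YX^{-1/2}\right)^{1/2}X^{1/2}$. *)

theory Defs
  imports "HOL-Analysis.Analysis"
begin

text \<open>A complex Hilbert space, presented as a real Hilbert space together with a
  complex structure J (multiplication by the imaginary unit): J is real-linear,
  J (J x) = -x and J is orthogonal.  Complex scalar multiplication and the complex
  inner product (linear in the first argument) are derived from J.\<close>

class chilbert = real_inner + complete_space +
  fixes imult :: "'a \<Rightarrow> 'a"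
  assumes imult_add: "imult (x + y) = imult x + imult y"
    and imult_scaleR: "imult (r *\<^sub>R x) = r *\<^sub>R imult x"
    and imult_imult: "imult (imult x) = - x"
    and imult_inner: "inner (imult x) (imult y) = inner x y"

definition cscale :: "complex \<Rightarrow> 'a::chilbert \<Rightarrow> 'a" where
  "cscale c x = Re c *\<^sub>R x + Im c *\<^sub>R imult x"

definition cinner :: "'a::chilbert \<Rightarrow> 'a \<Rightarrow> complex" where
  "cinner x y = Complex (inner x y) (inner x (imult y))"

text \<open>Bounded (complex-)linear operators B(H).\<close>
definition bop :: "('a::chilbert \<Rightarrow> 'a) set" where
  "bop = {T. bounded_linear T \<and> (\<forall>x. T (imult x) = imult (T x))}"

definition pos_op :: "('a::chilbert \<Rightarrow> 'a) \<Rightarrow> bool" where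
  "pos_op T \<longleftrightarrow> T \<in> bop \<and> (\<forall>x. Im (cinner (T x) x) = 0 \<and> 0 \<le> Re (cinner (T x) x))"

definition loewner_le :: "('a::chilbert \<Rightarrow> 'a) \<Rightarrow> ('a \<Rightarrow> 'a) \<Rightarrow> bool" where
  "loewner_le S T \<longleftrightarrow> S \<in> bop \<and> T \<in> bop \<and> pos_op (\<lambda>x. T x - S x)"

definition op_inv :: "('a::chilbert \<Rightarrow> 'a) \<Rightarrow> ('a \<Rightarrow> 'a)" where
  "op_inv T = inv T"

definition op_sqrt :: "('a::chilbert \<Rightarrow> 'a) \<Rightarrow> ('a \<Rightarrow> 'a)" where
  "op_sqrt T = (THE S. pos_op S \<and> S \<circ> S = T)"

definition gmean :: "('a::chilbert \<Rightarrow> 'a) \<Rightarrow> ('a \<Rightarrow> 'a) \<Rightarrow> ('a \<Rightarrow> 'a)" where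
  "gmean X Y = op_sqrt X \<circ>
      op_sqrt (op_inv (op_sqrt X) \<circ> Y \<circ> op_inv (op_sqrt X)) \<circ> op_sqrt X"

definition unital_pos_map :: "(('a::chilbert \<Rightarrow> 'a) \<Rightarrow> ('b::chilbert \<Rightarrow> 'b)) \<Rightarrow> bool" where
  "unital_pos_map \<Phi> \<longleftrightarrow>
     (\<forall>T\<in>bop. \<Phi> T \<in> bop) \<and>
     (\<forall>S\<in>bop. \<forall>T\<in>bop. \<Phi> (\<lambda>x. S x + T x) = (\<lambda>y. \<Phi> S y + \<Phi> T y)) \<and>
     (\<forall>c. \<forall>T\<in>bop. \<Phi> (\<lambda>x. cscale c (T x)) = (\<lambda>y. cscale c (\<Phi> T y))) \<and>
     (\<forall>T. pos_op T \<longrightarrow> pos_op (\<Phi> T)) \<and>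
     \<Phi> id = id"

end

(*
  All four assertions hold for every unital positive map, so they are equivalent.  The common
  source is (M - A)(A - m) \<ge> 0, that is A\<^sup>2 \<le> (M + m)A - Mm, and, after multiplying by the
  commuting positive operator A\<inverse>, Mm A\<inverse> \<le> (M + m) - A.  A positive map preserves both:
  Mm \<Phi>(A\<inverse>) \<le> (M + m) - \<Phi>(A) and \<Phi>(A\<^sup>2) \<le> (M + m)\<Phi>(A) - Mm.  Now (i) follows from the
  operator tangent inequality 2c - X \<le> c\<^sup>2X\<inverse> with c = (M + m)/2, (ii) from the scalar bound
  t(M + m - t) \<le> (M + m)\<^sup>2/4, and (iv) from (\<kappa>\<Phi>(A) - \<surd>(Mm))\<^sup>2 \<ge> 0.  For (iii), (i) applied
  to A\<inverse>, whose bounds 1/M and 1/m give the same constant \<kappa>, yields \<Phi>(A) \<le> \<kappa>\<^sup>2\<Phi>(A\<inverse>)\<inverse>,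
  and X \<sharp> Y \<le> \<kappa> for X = \<Phi>(A\<inverse>), Y = \<Phi>(A) then follows from operator monotonicity of the
  square root.

  The operator theory needed is elementary: coercive self-adjoint operators are inverted by a
  Neumann series, positive square roots are the binomial series of \<surd>(1 - z), unique because they
  commute with everything commuting with the square, and monotonicity of the square root is
  checked on approximate eigenvectors.
*)

theory Submission
  imports Defs "HOL-Computational_Algebra.Formal_Power_Series"
begin

section \<open>Binomial series of the square root\<close>

definition sqrt_one_minus_coeff :: "nat \<Rightarrow> real" where
  "sqrt_one_minus_coeff n = (-1) ^ n * ((1/2) gchoose n)"

lemma sqrt_one_minus_coeff_0 [simp]: "sqrt_one_minus_coeff 0 = 1"
  by (simp add: sqrt_one_minus_coeff_def)

lemma sqrt_one_minus_coeff_Suc: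
  "sqrt_one_minus_coeff (Suc n) = sqrt_one_minus_coeff n * ((real n - 1/2) / (real n + 1))"
proof -
  have "(1/2::real) * ((1/2) gchoose n) =
      real n * ((1/2) gchoose n) + real (Suc n) * ((1/2) gchoose Suc n)"
    by (rule gbinomial_mult_1)
  then have Suc: "((1/2::real) gchoose Suc n) = ((1/2) gchoose n) * (1/2 - real n) / (real n + 1)"
    by (simp add: field_simps)
  have "sqrt_one_minus_coeff (Suc n) =
      (-1) ^ n * ((1/2) gchoose n) * (-(1/2 - real n) / (real n + 1))"
    unfolding sqrt_one_minus_coeff_def Suc by (simp add: field_simps)
  also have "-(1/2 - real n) / (real n + 1) = (real n - 1/2) / (real n + 1)"
    by (simp add: field_simps)
  finally show ?thesis
    by (simp add: sqrt_one_minus_coeff_def)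
qed

lemma sum_abs_sqrt_one_minus_coeff:
  "(\<Sum>k\<le>n. \<bar>sqrt_one_minus_coeff k\<bar>) = 2 - 2 * (real n + 1) * \<bar>sqrt_one_minus_coeff (Suc n)\<bar>"
proof (induction n)
  case 0
  then show ?case by (simp add: sqrt_one_minus_coeff_Suc)
next
  case (Suc n)
  have "(real (Suc n) - 1/2) / (real (Suc n) + 1) = (real n + 1/2) / (real n + 2)"
    by (simp add: field_simps)
  moreover have "(real n + 1/2) / (real n + 2) > 0"
    by (intro divide_pos_pos) auto
  ultimately have "\<bar>sqrt_one_minus_coeff (Suc (Suc n))\<bar> =
      \<bar>sqrt_one_minus_coeff (Suc n)\<bar> * ((real n + 1/2) / (real n + 2))"
    using sqrt_one_minus_coeff_Suc[of "Suc n"] by (simp add: abs_mult)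
  then have "2 * (real (Suc n) + 1) * \<bar>sqrt_one_minus_coeff (Suc (Suc n))\<bar> =
      (2 * real n + 1) * \<bar>sqrt_one_minus_coeff (Suc n)\<bar>"
    by (simp add: field_simps)
  with Suc.IH show ?case
    by (simp add: algebra_simps)
qed

lemma summable_abs_sqrt_one_minus_coeff: "summable (\<lambda>n. \<bar>sqrt_one_minus_coeff n\<bar>)"
  and suminf_abs_sqrt_one_minus_coeff_le: "(\<Sum>n. \<bar>sqrt_one_minus_coeff n\<bar>) \<le> 2"
proof -
  have bound: "(\<Sum>k<n. \<bar>sqrt_one_minus_coeff k\<bar>) \<le> 2" for n
    using sum_abs_sqrt_one_minus_coeff[of "n - 1"] by (cases n) (simp_all add: lessThan_Suc_atMost)
  show "summable (\<lambda>n. \<bar>sqrt_one_minus_coeff n\<bar>)"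
    by (rule summableI_nonneg_bounded[OF _ bound]) simp
  then show "(\<Sum>n. \<bar>sqrt_one_minus_coeff n\<bar>) \<le> 2"
    by (rule suminf_le_const[OF _ bound])
qed

lemma sqrt_one_minus_coeff_convolution:
  "(\<Sum>i\<le>n. sqrt_one_minus_coeff i * sqrt_one_minus_coeff (n - i)) =
    (if n = 0 then 1 else if n = 1 then -1 else 0)"
proof -
  have "(\<Sum>i\<le>n. sqrt_one_minus_coeff i * sqrt_one_minus_coeff (n - i)) =
      (-1) ^ n * (\<Sum>i\<le>n. ((1/2::real) gchoose i) * ((1/2) gchoose (n - i)))"
    unfolding sum_distrib_left
    by (intro sum.cong refl) (simp add: sqrt_one_minus_coeff_def power_add[symmetric] mult_ac)
  also have "\<dots> = (-1) ^ n * ((1/2 + 1/2::real) gchoose n)"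
    by (simp add: atMost_atLeast0 gbinomial_Vandermonde)
  also have "((1/2 + 1/2::real) gchoose n) = real (1 choose n)"
    by (simp add: binomial_gbinomial)
  finally show ?thesis
    by (cases n; cases "n = 1") (auto simp: binomial_eq_0)
qed

lemma bounded_bilinear_abs_summable_on_product:
  fixes a :: "nat \<Rightarrow> 'a::real_normed_vector" and b :: "nat \<Rightarrow> 'b::real_normed_vector"
    and prod :: "'a \<Rightarrow> 'b \<Rightarrow> 'c::real_normed_vector"
  assumes prod: "bounded_bilinear prod"
    and a: "summable (\<lambda>k. norm (a k))" and b: "summable (\<lambda>k. norm (b k))"
  shows "(\<lambda>(i, j). prod (a i) (b j)) abs_summable_on UNIV"
proof -
  obtain K where K: "\<And>x y. norm (prod x y) \<le> norm x * norm y * K" "K > 0"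
    using bounded_bilinear.pos_bounded[OF prod] by blast
  show ?thesis
    unfolding abs_summable_iff_bdd_above
  proof (rule bdd_aboveI2)
    fix F :: "(nat \<times> nat) set"
    assume "F \<in> {F. F \<subseteq> UNIV \<and> finite F}"
    then have "finite (fst ` F \<union> snd ` F)"
      by auto
    then obtain n where "fst ` F \<union> snd ` F \<subseteq> {..<n}"
      using finite_nat_bounded by blast
    then have F: "F \<subseteq> {..<n} \<times> {..<n}"
      by (force simp: subset_iff)
    have "(\<Sum>p\<in>F. norm (case p of (i, j) \<Rightarrow> prod (a i) (b j))) \<le>
        (\<Sum>(i, j)\<in>F. norm (a i) * norm (b j) * K)"
      by (intro sum_mono) (auto simp: K(1))
    also have "\<dots> \<le> (\<Sum>(i, j)\<in>{..<n} \<times> {..<n}. norm (a i) * norm (b j) * K)"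
      using F K(2) by (intro sum_mono2) auto
    also have "\<dots> = (\<Sum>i<n. \<Sum>j<n. norm (a i) * norm (b j)) * K"
      by (simp add: sum.cartesian_product[symmetric] sum_distrib_right)
    also have "\<dots> = (\<Sum>i<n. norm (a i)) * (\<Sum>j<n. norm (b j)) * K"
      by (simp only: sum_product)
    also have "\<dots> \<le> (\<Sum>i. norm (a i)) * (\<Sum>j. norm (b j)) * K"
      using K(2) a b
      by (intro mult_right_mono mult_mono sum_le_suminf suminf_nonneg sum_nonneg) auto
    finally show "(\<Sum>p\<in>F. norm (case p of (i, j) \<Rightarrow> prod (a i) (b j))) \<le>
        (\<Sum>i. norm (a i)) * (\<Sum>j. norm (b j)) * K" .
  qed
qed

lemma bounded_bilinear_has_sum_product:
  fixes a :: "nat \<Rightarrow> 'a::banach" and b :: "nat \<Rightarrow> 'b::banach"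
    and prod :: "'a \<Rightarrow> 'b \<Rightarrow> 'c::banach"
  assumes prod: "bounded_bilinear prod"
    and a: "summable (\<lambda>k. norm (a k))" and b: "summable (\<lambda>k. norm (b k))"
  shows "((\<lambda>(i, j). prod (a i) (b j)) has_sum prod (suminf a) (suminf b)) UNIV"
proof -
  interpret bounded_bilinear prod
    by (fact prod)
  have ha: "(a has_sum suminf a) UNIV" and hb: "(b has_sum suminf b) UNIV"
    using a b by (auto intro!: norm_summable_imp_has_sum summable_sums summable_norm_cancel)
  have "(\<Sum>\<^sub>\<infinity>j. prod (a i) (b j)) = prod (a i) (suminf b)" for i
    by (simp add: infsumI has_sum_bounded_linear[OF bounded_linear_right hb])
  moreover have "(\<Sum>\<^sub>\<infinity>i. prod (a i) (suminf b)) = prod (suminf a) (suminf b)"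
    by (rule infsumI[OF has_sum_bounded_linear[OF bounded_linear_left ha]])
  moreover have "(\<lambda>(i, j). prod (a i) (b j)) summable_on UNIV"
    by (rule abs_summable_summable[OF bounded_bilinear_abs_summable_on_product[OF prod a b]])
  ultimately show ?thesis
    using infsum_Sigma_banach[of "\<lambda>(i, j). prod (a i) (b j)" UNIV "\<lambda>_. UNIV"]
    by (simp add: has_sum_infsum flip: UNIV_Times_UNIV)
qed

lemma Cauchy_product_sums_bilinear:
  fixes a :: "nat \<Rightarrow> 'a::banach" and b :: "nat \<Rightarrow> 'b::banach"
    and prod :: "'a \<Rightarrow> 'b \<Rightarrow> 'c::banach"
  assumes prod: "bounded_bilinear prod"
    and a: "summable (\<lambda>k. norm (a k))" and b: "summable (\<lambda>k. norm (b k))"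
  shows "(\<lambda>k. \<Sum>i\<le>k. prod (a i) (b (k - i))) sums prod (suminf a) (suminf b)"
proof -
  have "bij_betw (\<lambda>(k, i). (i, k - i)) (SIGMA k:UNIV. {..k::nat}) UNIV"
    by (rule bij_betw_byWitness[where f' = "\<lambda>(i, j). (i + j, i)"]) auto
  then have "((\<lambda>(k, i). prod (a i) (b (k - i))) has_sum prod (suminf a) (suminf b))
      (SIGMA k:UNIV. {..k})"
    using has_sum_reindex_bij_betw[of "\<lambda>(k, i). (i, k - i)" _ UNIV "\<lambda>(i, j). prod (a i) (b j)"]
      bounded_bilinear_has_sum_product[OF prod a b]
    by (simp add: split_def)
  then have "((\<lambda>k. \<Sum>i\<le>k. prod (a i) (b (k - i))) has_sum prod (suminf a) (suminf b)) UNIV"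
    by (rule has_sum_SigmaD) (simp add: has_sum_finite)
  then show ?thesis
    by (rule has_sum_imp_sums)
qed

definition blinfun_power :: "('a::real_normed_vector \<Rightarrow>\<^sub>L 'a) \<Rightarrow> nat \<Rightarrow> 'a \<Rightarrow>\<^sub>L 'a" where
  "blinfun_power L n = ((\<lambda>X. L o\<^sub>L X) ^^ n) id_blinfun"

lemma blinfun_apply_blinfun_power: "blinfun_apply (blinfun_power L n) x = (blinfun_apply L ^^ n) x"
  by (induction n arbitrary: x) (simp_all add: blinfun_power_def)

lemma blinfun_power_add: "blinfun_power L i o\<^sub>L blinfun_power L j = blinfun_power L (i + j)"
  by (rule blinfun_eqI) (simp add: blinfun_apply_blinfun_power funpow_add)

lemma norm_blinfun_power_le: "norm L \<le> 1 \<Longrightarrow> norm (blinfun_power L n) \<le> 1"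
proof (induction n)
  case 0
  show ?case by (simp add: blinfun_power_def norm_blinfun_id_le)
next
  case (Suc n)
  have "norm (blinfun_power L (Suc n)) \<le> norm L * norm (blinfun_power L n)"
    by (simp add: blinfun_power_def norm_blinfun_compose)
  also have "\<dots> \<le> 1"
    using Suc by (simp add: mult_le_one)
  finally show ?case .
qed

lemma norm_funpow_blinfun_le:
  fixes L :: "'a::real_normed_vector \<Rightarrow>\<^sub>L 'a"
  shows "norm L \<le> 1 \<Longrightarrow> norm ((blinfun_apply L ^^ n) x) \<le> norm x"
  using norm_blinfun[of "blinfun_power L n" x] norm_blinfun_power_le[of L n]
  by (simp add: blinfun_apply_blinfun_power) (meson mult_left_le_one_le norm_ge_zero order_trans)

definition sqrt_one_minus :: "('a::banach \<Rightarrow>\<^sub>L 'a) \<Rightarrow> 'a \<Rightarrow>\<^sub>L 'a" where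
  "sqrt_one_minus L = (\<Sum>n. sqrt_one_minus_coeff n *\<^sub>R blinfun_power L n)"

lemma summable_norm_sqrt_one_minus:
  "norm L \<le> 1 \<Longrightarrow> summable (\<lambda>n. norm (sqrt_one_minus_coeff n *\<^sub>R blinfun_power L n))"
  by (rule summable_comparison_test'[OF summable_abs_sqrt_one_minus_coeff])
    (simp add: mult_left_le norm_blinfun_power_le)

lemma sqrt_one_minus_sums:
  assumes "norm L \<le> 1"
  shows "(\<lambda>n. sqrt_one_minus_coeff n *\<^sub>R (blinfun_apply L ^^ n) x) sums sqrt_one_minus L x"
proof -
  have "(\<lambda>n. sqrt_one_minus_coeff n *\<^sub>R blinfun_power L n) sums sqrt_one_minus L"
    unfolding sqrt_one_minus_def
    by (rule summable_sums[OF summable_norm_cancel[OF summable_norm_sqrt_one_minus[OF assms]]])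
  from bounded_linear.sums[OF bounded_linear_apply_blinfun this, of x] show ?thesis
    by (simp add: blinfun_apply_blinfun_power blinfun.scaleR_left)
qed

lemma sqrt_one_minus_square:
  assumes "norm L \<le> 1"
  shows "sqrt_one_minus L o\<^sub>L sqrt_one_minus L = id_blinfun - L"
proof -
  let ?a = "\<lambda>n. sqrt_one_minus_coeff n *\<^sub>R blinfun_power L n"
  have "(\<lambda>k. \<Sum>i\<le>k. ?a i o\<^sub>L ?a (k - i)) sums (sqrt_one_minus L o\<^sub>L sqrt_one_minus L)"
    unfolding sqrt_one_minus_def
    using summable_norm_sqrt_one_minus[OF assms]
    by (intro Cauchy_product_sums_bilinear bounded_bilinear_blinfun_compose)
  moreover have "(\<Sum>i\<le>k. ?a i o\<^sub>L ?a (k - i)) =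
      (\<Sum>i\<le>k. sqrt_one_minus_coeff i * sqrt_one_minus_coeff (k - i)) *\<^sub>R blinfun_power L k"
    for k
    by (simp add: scaleR_sum_left blinfun_power_add
        bounded_bilinear.scaleR_left[OF bounded_bilinear_blinfun_compose]
        bounded_bilinear.scaleR_right[OF bounded_bilinear_blinfun_compose] mult.commute)
  ultimately have "(\<lambda>k. (if k = 0 then 1 else if k = 1 then -1 else 0) *\<^sub>R blinfun_power L k)
      sums (sqrt_one_minus L o\<^sub>L sqrt_one_minus L)"
    by (simp only: sqrt_one_minus_coeff_convolution)
  moreover have "L o\<^sub>L id_blinfun = L"
    by (rule blinfun_eqI) simp
  then have "(\<lambda>k. (if k = 0 then 1 else if k = 1 then -1 else 0) *\<^sub>R blinfun_power L k)
      sums (id_blinfun - L)"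
    using sums_finite[of "{0, 1}"
        "\<lambda>k. (if k = 0 then 1 else if k = 1 then -1 else 0) *\<^sub>R blinfun_power L k"]
    by (simp add: blinfun_power_def)
  ultimately show ?thesis
    using sums_unique2 by blast
qed

lemma funpow_commute: "(\<And>x. P (S x) = S (P x)) \<Longrightarrow> P ((S ^^ n) x) = (S ^^ n) (P x)"
  by (induction n arbitrary: x) simp_all

lemma funpow_symmetric:
  assumes "\<And>x y. inner (S x) y = inner x (S y)"
  shows "inner ((S ^^ n) x) y = inner x ((S ^^ n) y)"
proof (induction n arbitrary: y)
  case (Suc n)
  have "inner ((S ^^ Suc n) x) y = inner ((S ^^ n) x) (S y)"
    by (simp add: assms)
  also have "\<dots> = inner x ((S ^^ Suc n) y)"
    by (simp add: Suc funpow_swap1)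
  finally show ?case .
qed simp

lemma sqrt_one_minus_commute:
  fixes L :: "'a::banach \<Rightarrow>\<^sub>L 'a"
  assumes L: "norm L \<le> 1" and P: "bounded_linear P" and comm: "\<And>x. P (L x) = L (P x)"
  shows "P (sqrt_one_minus L x) = sqrt_one_minus L (P x)"
proof -
  have "(\<lambda>n. P (sqrt_one_minus_coeff n *\<^sub>R (blinfun_apply L ^^ n) x)) sums P (sqrt_one_minus L x)"
    by (rule bounded_linear.sums[OF P sqrt_one_minus_sums[OF L]])
  moreover have "P (sqrt_one_minus_coeff n *\<^sub>R (blinfun_apply L ^^ n) x) =
      sqrt_one_minus_coeff n *\<^sub>R (blinfun_apply L ^^ n) (P x)" for n
    using funpow_commute[of P "blinfun_apply L", OF comm] by (simp add: linear_simps(5)[OF P])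
  ultimately have
    "(\<lambda>n. sqrt_one_minus_coeff n *\<^sub>R (blinfun_apply L ^^ n) (P x)) sums P (sqrt_one_minus L x)"
    by simp
  then show ?thesis
    using sqrt_one_minus_sums[OF L, of "P x"] by (rule sums_unique2)
qed

lemma sqrt_one_minus_symmetric:
  fixes L :: "'a::{real_inner, banach} \<Rightarrow>\<^sub>L 'a"
  assumes L: "norm L \<le> 1" and sym: "\<And>x y. inner (L x) y = inner x (L y)"
  shows "inner (sqrt_one_minus L x) y = inner x (sqrt_one_minus L y)"
proof -
  have "(\<lambda>n. inner (sqrt_one_minus_coeff n *\<^sub>R (blinfun_apply L ^^ n) x) y) sums
      inner (sqrt_one_minus L x) y"
    by (rule bounded_linear.sums[OF bounded_linear_inner_left sqrt_one_minus_sums[OF L]])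
  moreover have "(\<lambda>n. inner x (sqrt_one_minus_coeff n *\<^sub>R (blinfun_apply L ^^ n) y)) sums
      inner x (sqrt_one_minus L y)"
    by (rule bounded_linear.sums[OF bounded_linear_inner_right sqrt_one_minus_sums[OF L]])
  ultimately show ?thesis
    by (simp add: funpow_symmetric[OF sym] sums_unique2)
qed

text \<open>Since \<open>\<Sum>|c\<^sub>n| \<le> 2\<close> for the coefficients of \<open>\<surd>(1 - z)\<close> and \<open>c\<^sub>0 = 1\<close>, the
  leading term dominates the tail on the unit ball of a contraction.\<close>

lemma sqrt_one_minus_nonneg:
  fixes L :: "'a::{real_inner, banach} \<Rightarrow>\<^sub>L 'a"
  assumes L: "norm L \<le> 1"
  shows "0 \<le> inner (sqrt_one_minus L x) x"
proof -
  define t where "t n = sqrt_one_minus_coeff n * inner ((blinfun_apply L ^^ n) x) x" for n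
  define b where "b n = \<bar>sqrt_one_minus_coeff n\<bar> * (norm x)\<^sup>2" for n
  have "t sums inner (sqrt_one_minus L x) x"
    unfolding t_def
    using bounded_linear.sums[OF bounded_linear_inner_left[of x] sqrt_one_minus_sums[OF L, of x]]
    by simp
  then have "(\<lambda>n. t (Suc n)) sums (inner (sqrt_one_minus L x) x - t 0)"
    by (simp add: sums_Suc_iff)
  moreover have "t 0 = (norm x)\<^sup>2"
    by (simp add: t_def power2_norm_eq_inner)
  ultimately have t: "(\<lambda>n. t (Suc n)) sums (inner (sqrt_one_minus L x) x - (norm x)\<^sup>2)"
    by simp
  have "b sums ((\<Sum>n. \<bar>sqrt_one_minus_coeff n\<bar>) * (norm x)\<^sup>2)"
    unfolding b_def by (rule sums_mult2[OF summable_sums[OF summable_abs_sqrt_one_minus_coeff]])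
  then have "(\<lambda>n. b (Suc n)) sums ((\<Sum>n. \<bar>sqrt_one_minus_coeff n\<bar>) * (norm x)\<^sup>2 - b 0)"
    by (simp add: sums_Suc_iff)
  then have b: "(\<lambda>n. - b (Suc n)) sums - ((\<Sum>n. \<bar>sqrt_one_minus_coeff n\<bar>) * (norm x)\<^sup>2 - (norm x)\<^sup>2)"
    by (intro sums_minus) (simp add: b_def)
  have le: "- b (Suc n) \<le> t (Suc n)" for n
  proof -
    have "\<bar>inner ((blinfun_apply L ^^ Suc n) x) x\<bar> \<le> norm ((blinfun_apply L ^^ Suc n) x) * norm x"
      by (rule Cauchy_Schwarz_ineq2)
    also have "\<dots> \<le> (norm x)\<^sup>2"
      using norm_funpow_blinfun_le[OF L, of "Suc n" x]
      by (simp only: power2_eq_square mult_right_mono norm_ge_zero)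
    finally have "\<bar>t (Suc n)\<bar> \<le> b (Suc n)"
      unfolding t_def b_def abs_mult by (simp add: mult_left_mono)
    then show ?thesis
      by linarith
  qed
  have "- ((\<Sum>n. \<bar>sqrt_one_minus_coeff n\<bar>) * (norm x)\<^sup>2 - (norm x)\<^sup>2) \<le>
      inner (sqrt_one_minus L x) x - (norm x)\<^sup>2"
    by (rule sums_le[OF le b t])
  moreover have "(\<Sum>n. \<bar>sqrt_one_minus_coeff n\<bar>) * (norm x)\<^sup>2 \<le> 2 * (norm x)\<^sup>2"
    by (intro mult_right_mono suminf_abs_sqrt_one_minus_coeff_le) simp
  ultimately show ?thesis
    by linarith
qed

section \<open>Bounded operators on a complex Hilbert space\<close>

instance chilbert \<subseteq> banach ..

lemma linear_imult: "linear (imult :: 'a::chilbert \<Rightarrow> 'a)"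
  by (rule linearI) (simp_all add: imult_add imult_scaleR)

lemma norm_imult [simp]: "norm (imult x) = norm (x :: 'a::chilbert)"
  by (simp add: norm_eq_sqrt_inner imult_inner)

lemma bounded_linear_imult: "bounded_linear (imult :: 'a::chilbert \<Rightarrow> 'a)"
proof -
  interpret linear imult
    by (rule linear_imult)
  show ?thesis
    by unfold_locales (rule exI[of _ 1], simp)
qed

lemma inner_imult_left: "inner (imult x) y = - inner x (imult y)" for x y :: "'a::chilbert"
  using imult_inner[of "imult x" y] by (simp add: imult_imult)

lemma cscale_of_real [simp]: "cscale (complex_of_real r) x = r *\<^sub>R x"
  by (simp add: cscale_def)

lemma Re_cinner [simp]: "Re (cinner x y) = inner x y"
  and Im_cinner [simp]: "Im (cinner x y) = inner x (imult y)"
  by (simp_all add: cinner_def)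

lemma bopI: "bounded_linear T \<Longrightarrow> (\<And>x. T (imult x) = imult (T x)) \<Longrightarrow> T \<in> bop"
  by (simp add: bop_def)

lemma bop_bounded_linear: "T \<in> bop \<Longrightarrow> bounded_linear T"
  and bop_imult: "T \<in> bop \<Longrightarrow> T (imult x) = imult (T x)"
  by (simp_all add: bop_def)

lemmas bop_linear_simps = linear_simps[OF bop_bounded_linear]

lemma bop_id [simp]: "id \<in> bop" "(\<lambda>x. x) \<in> bop"
  by (simp_all add: bop_def bounded_linear_ident id_def)

lemma bop_comp: "S \<in> bop \<Longrightarrow> T \<in> bop \<Longrightarrow> (\<lambda>x. S (T x)) \<in> bop"
  by (simp add: bop_def bounded_linear_compose[of S T, unfolded o_def])

lemma bop_add: "S \<in> bop \<Longrightarrow> T \<in> bop \<Longrightarrow> (\<lambda>x. S x + T x) \<in> bop"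
  by (simp add: bop_def imult_add bounded_linear_add)

lemma bop_diff: "S \<in> bop \<Longrightarrow> T \<in> bop \<Longrightarrow> (\<lambda>x. S x - T x) \<in> bop"
  by (simp add: bop_def bounded_linear_sub linear_diff[OF linear_imult])

lemma bop_scaleR: "T \<in> bop \<Longrightarrow> (\<lambda>x. r *\<^sub>R T x) \<in> bop"
  by (simp add: bop_def imult_scaleR bounded_linear_const_scaleR)

lemma bop_scaleR_id: "(\<lambda>x. r *\<^sub>R x) \<in> bop"
  using bop_scaleR[OF bop_id(2)] .

lemma bop_inner_le: "T \<in> bop \<Longrightarrow> \<exists>K>0. \<forall>x. \<bar>inner (T x) x\<bar> \<le> K * (norm x)\<^sup>2"
proof -
  assume "T \<in> bop"
  then obtain K where K: "K > 0" "\<And>x. norm (T x) \<le> norm x * K"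
    using bounded_linear.pos_bounded[OF bop_bounded_linear] by blast
  have "\<bar>inner (T x) x\<bar> \<le> K * (norm x)\<^sup>2" for x
    using Cauchy_Schwarz_ineq2[of "T x" x] mult_right_mono[OF K(2)[of x] norm_ge_zero[of x]]
    by (simp add: power2_eq_square mult_ac)
  with K(1) show ?thesis by blast
qed

definition selfadjoint :: "('a::chilbert \<Rightarrow> 'a) \<Rightarrow> bool" where
  "selfadjoint T \<longleftrightarrow> T \<in> bop \<and> (\<forall>x y. inner (T x) y = inner x (T y))"

lemma selfadjointI: "T \<in> bop \<Longrightarrow> (\<And>x y. inner (T x) y = inner x (T y)) \<Longrightarrow> selfadjoint T"
  by (simp add: selfadjoint_def)

lemma selfadjoint_bop: "selfadjoint T \<Longrightarrow> T \<in> bop"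
  and selfadjoint_inner: "selfadjoint T \<Longrightarrow> inner (T x) y = inner x (T y)"
  by (simp_all add: selfadjoint_def)

lemma selfadjoint_id [simp]: "selfadjoint id" "selfadjoint (\<lambda>x. x)"
  by (simp_all add: selfadjoint_def)

lemma selfadjoint_add: "selfadjoint S \<Longrightarrow> selfadjoint T \<Longrightarrow> selfadjoint (\<lambda>x. S x + T x)"
  by (simp add: selfadjoint_def bop_add inner_add_left inner_add_right)

lemma selfadjoint_diff: "selfadjoint S \<Longrightarrow> selfadjoint T \<Longrightarrow> selfadjoint (\<lambda>x. S x - T x)"
  by (simp add: selfadjoint_def bop_diff inner_diff_left inner_diff_right)

lemma selfadjoint_scaleR: "selfadjoint T \<Longrightarrow> selfadjoint (\<lambda>x. r *\<^sub>R T x)"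
  by (simp add: selfadjoint_def bop_scaleR)

lemma selfadjoint_scaleR_id: "selfadjoint (\<lambda>x. r *\<^sub>R x)"
  using selfadjoint_scaleR[OF selfadjoint_id(2)] .

lemma selfadjoint_congruence: "selfadjoint S \<Longrightarrow> selfadjoint T \<Longrightarrow> selfadjoint (\<lambda>x. S (T (S x)))"
  by (simp add: selfadjoint_def bop_comp[OF _ bop_comp])

lemma selfadjoint_comp_commute:
  assumes "selfadjoint S" "selfadjoint T" "\<And>x. S (T x) = T (S x)"
  shows "selfadjoint (\<lambda>x. S (T x))"
  using assms by (simp add: selfadjoint_def bop_comp)

lemma selfadjoint_square: "selfadjoint T \<Longrightarrow> selfadjoint (\<lambda>x. T (T x))"
  by (rule selfadjoint_comp_commute) simp_all

lemma selfadjoint_inner_square: "selfadjoint T \<Longrightarrow> inner (T (T x)) x = (norm (T x))\<^sup>2"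
  by (simp add: selfadjoint_inner power2_norm_eq_inner)

text \<open>For an operator commuting with the complex structure, a real numerical range forces
  symmetry: the imaginary parts of \<open>\<langle>T(x + y), x + y\<rangle>\<close> and \<open>\<langle>T(x + iy), x + iy\<rangle>\<close> vanish.\<close>

lemma pos_op_iff_selfadjoint: "pos_op T \<longleftrightarrow> selfadjoint T \<and> (\<forall>x. 0 \<le> inner (T x) x)"
proof
  assume "pos_op T"
  then have T: "T \<in> bop" and im: "\<And>x. inner (T x) (imult x) = 0" and nonneg: "\<And>x. 0 \<le> inner (T x) x"
    by (simp_all add: pos_op_def)
  have cross: "inner (T x) (imult y) + inner (T y) (imult x) = 0" for x y
    using im[of "x + y"] im[of x] im[of y]
    by (simp add: bop_linear_simps[OF T] imult_add inner_add_left inner_add_right)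
  have "inner (T x) y = inner x (T y)" for x y
  proof -
    have "- inner (T x) y + inner (imult (T y)) (imult x) = 0"
      using cross[of x "imult y"] by (simp add: imult_imult bop_imult[OF T])
    then show ?thesis
      by (simp add: imult_inner inner_commute)
  qed
  with T nonneg show "selfadjoint T \<and> (\<forall>x. 0 \<le> inner (T x) x)"
    by (simp add: selfadjointI)
next
  assume H: "selfadjoint T \<and> (\<forall>x. 0 \<le> inner (T x) x)"
  have im: "inner (T x) (imult x) = 0" for x
  proof -
    have "inner (T x) (imult x) = inner x (imult (T x))"
      using H by (simp add: selfadjoint_inner bop_imult selfadjoint_bop)
    also have "\<dots> = - inner (T x) (imult x)"
      using inner_imult_left[of x "T x"] by (simp add: inner_commute)
    finally show ?thesis
      by linarith
  qed
  show "pos_op T"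
    unfolding pos_op_def Re_cinner Im_cinner using H im by (blast intro: selfadjoint_bop)
qed

lemma pos_op_selfadjoint: "pos_op T \<Longrightarrow> selfadjoint T"
  and pos_op_inner_nonneg: "pos_op T \<Longrightarrow> 0 \<le> inner (T x) x"
  by (simp_all add: pos_op_iff_selfadjoint)

lemma loewner_le_iff_inner:
  "selfadjoint S \<Longrightarrow> selfadjoint T \<Longrightarrow> loewner_le S T \<longleftrightarrow> (\<forall>x. inner (S x) x \<le> inner (T x) x)"
  by (simp add: loewner_le_def pos_op_iff_selfadjoint selfadjoint_bop selfadjoint_diff
      inner_diff_left)

lemma selfadjoint_polarization_le:
  assumes S: "selfadjoint S" and bound: "\<And>z. \<bar>inner (S z) z\<bar> \<le> d * (norm z)\<^sup>2"
  shows "2 * inner (S x) y \<le> d * ((norm x)\<^sup>2 + (norm y)\<^sup>2)"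
proof -
  note simps = bop_linear_simps[OF selfadjoint_bop[OF S]]
  have sym: "inner (S y) x = inner (S x) y"
    using selfadjoint_inner[OF S, of y x] by (simp only: inner_commute)
  have "4 * inner (S x) y = inner (S (x + y)) (x + y) - inner (S (x - y)) (x - y)"
    by (simp add: simps inner_add_left inner_add_right inner_diff_left inner_diff_right sym)
  also have "\<dots> \<le> d * (norm (x + y))\<^sup>2 + d * (norm (x - y))\<^sup>2"
    using bound[of "x + y"] bound[of "x - y"] by linarith
  also have "\<dots> = 2 * (d * ((norm x)\<^sup>2 + (norm y)\<^sup>2))"
    by (simp add: power2_norm_eq_inner inner_add_left inner_add_right inner_diff_left
        inner_diff_right inner_commute algebra_simps)
  finally show ?thesis
    by simp
qed

lemma selfadjoint_norm_le:
  assumes S: "selfadjoint S" and bound: "\<And>z. \<bar>inner (S z) z\<bar> \<le> d * (norm z)\<^sup>2"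
  shows "norm (S x) \<le> d * norm x"
proof (cases "S x = 0")
  case True
  have "0 \<le> d * (norm x)\<^sup>2"
    using bound[of x] by linarith
  then have "x = 0 \<or> 0 \<le> d"
    by (auto simp: zero_le_mult_iff)
  with True show ?thesis
    by auto
next
  case False
  define t where "t = norm x / norm (S x)"
  have "2 * inner (S x) (t *\<^sub>R S x) \<le> d * ((norm x)\<^sup>2 + (norm (t *\<^sub>R S x))\<^sup>2)"
    by (rule selfadjoint_polarization_le[OF S bound])
  then have "norm x * norm (S x) \<le> norm x * (d * norm x)"
    using False by (simp add: t_def power2_norm_eq_inner[symmetric] power2_eq_square field_simps)
  moreover have "x \<noteq> 0"
    using False bop_linear_simps(3)[OF selfadjoint_bop[OF S]] by auto
  ultimately show ?thesis
    by simp
qed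

text \<open>The operator inequality \<open>(P - a)(b - P) \<ge> 0\<close>, read off via the norm bound for
  \<open>2P - (a + b)\<close>.\<close>

lemma selfadjoint_norm_sq_le:
  assumes P: "selfadjoint P"
    and lo: "\<And>x. a * (norm x)\<^sup>2 \<le> inner (P x) x" and hi: "\<And>x. inner (P x) x \<le> b * (norm x)\<^sup>2"
  shows "(norm (P x))\<^sup>2 \<le> (a + b) * inner (P x) x - a * b * (norm x)\<^sup>2"
proof -
  let ?Q = "\<lambda>x. 2 *\<^sub>R P x - (a + b) *\<^sub>R x"
  have Q: "selfadjoint ?Q"
    by (intro selfadjoint_diff selfadjoint_scaleR P selfadjoint_scaleR_id)
  have "\<bar>inner (?Q z) z\<bar> \<le> (b - a) * (norm z)\<^sup>2" for z
    using lo[of z] hi[of z]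
    by (simp add: inner_diff_left power2_norm_eq_inner abs_le_iff algebra_simps)
  then have "norm (?Q x) \<le> (b - a) * norm x"
    by (rule selfadjoint_norm_le[OF Q])
  then have "(norm (?Q x))\<^sup>2 \<le> ((b - a) * norm x)\<^sup>2"
    by (rule power_mono) simp
  moreover have "(norm (?Q x))\<^sup>2 =
      4 * (norm (P x))\<^sup>2 - 4 * ((a + b) * inner (P x) x) + (a + b)\<^sup>2 * (norm x)\<^sup>2"
    by (simp only: power2_norm_eq_inner)
      (simp add: inner_diff_left inner_diff_right inner_commute[of x "P x"] power2_eq_square
        algebra_simps)
  ultimately show ?thesis
    by (simp add: power2_eq_square algebra_simps)
qed

lemma pos_op_norm_sq_le:
  assumes "pos_op P"
  obtains b where "b > 0" "\<And>x. (norm (P x))\<^sup>2 \<le> b * inner (P x) x"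
proof -
  obtain K where K: "K > 0" "\<And>x. \<bar>inner (P x) x\<bar> \<le> K * (norm x)\<^sup>2"
    using bop_inner_le[OF selfadjoint_bop[OF pos_op_selfadjoint[OF assms]]] by blast
  have "(norm (P x))\<^sup>2 \<le> (0 + K) * inner (P x) x - 0 * K * (norm x)\<^sup>2" for x
    using K(2) pos_op_inner_nonneg[OF assms]
    by (intro selfadjoint_norm_sq_le pos_op_selfadjoint[OF assms]) (auto simp: abs_le_iff)
  with K(1) show ?thesis
    using that by simp
qed

lemma pos_op_eq_zero:
  assumes "pos_op P" "inner (P x) x = 0"
  shows "P x = 0"
proof -
  obtain b where "(norm (P x))\<^sup>2 \<le> b * inner (P x) x"
    using pos_op_norm_sq_le[OF assms(1)] by blast
  with assms(2) show ?thesis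
    by simp
qed

lemma bop_coercive_norm_ge:
  assumes T: "T \<in> bop" and lo: "\<And>x. m * (norm x)\<^sup>2 \<le> inner (T x) x"
  shows "m * norm x \<le> norm (T x)"
proof (cases "x = 0")
  case True
  then show ?thesis
    by (simp add: bop_linear_simps(3)[OF T])
next
  case False
  have "norm x * (m * norm x) \<le> norm x * norm (T x)"
    using lo[of x] Cauchy_Schwarz_ineq2[of "T x" x] by (simp add: power2_eq_square mult_ac)
  with False show ?thesis
    by simp
qed

section \<open>Inverses of coercive operators\<close>

lemma funpow_norm_le:
  fixes S :: "'a::real_normed_vector \<Rightarrow> 'a"
  assumes S: "\<And>x. norm (S x) \<le> q * norm x" and q: "0 \<le> q"
  shows "norm ((S ^^ n) y) \<le> q ^ n * norm y"
proof (induction n)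
  case (Suc n)
  have "norm ((S ^^ Suc n) y) \<le> q * norm ((S ^^ n) y)"
    by (simp add: S)
  also have "\<dots> \<le> q ^ Suc n * norm y"
    using mult_left_mono[OF Suc q] by simp
  finally show ?case .
qed simp

locale coercive_selfadjoint =
  fixes T :: "'a::chilbert \<Rightarrow> 'a" and m :: real
  assumes selfadjoint: "selfadjoint T" and pos: "0 < m"
    and lower: "\<And>x. m * (norm x)\<^sup>2 \<le> inner (T x) x"
begin

lemma bop: "T \<in> bop"
  using selfadjoint by (rule selfadjoint_bop)

lemma inner_nonneg: "0 \<le> inner (T x) x"
  using lower[of x] pos by (meson order_trans zero_le_mult_iff zero_le_power2 less_imp_le)

lemma pos_op: "pos_op T"
  by (simp add: pos_op_iff_selfadjoint selfadjoint inner_nonneg)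

text \<open>Solve \<open>T z = y\<close> by the Neumann series of the strict contraction \<open>I - T/b\<close>, where
  \<open>b\<close> bounds the numerical range of \<open>T\<close> from above.\<close>

lemma surj: "surj T"
proof -
  obtain K where K: "K > 0" "\<And>x. \<bar>inner (T x) x\<bar> \<le> K * (norm x)\<^sup>2"
    using bop_inner_le[OF bop] by blast
  define b where "b = K + m"
  define q where "q = 1 - m / b"
  have b: "0 < b" "m < b" and q: "0 \<le> q" "q < 1"
    using K(1) pos by (simp_all add: b_def q_def field_simps)
  define S where "S x = x - (1 / b) *\<^sub>R T x" for x
  have S: "selfadjoint S"
    unfolding S_def[abs_def]
    by (intro selfadjoint_diff selfadjoint_id selfadjoint_scaleR selfadjoint)
  have "\<bar>inner (S x) x\<bar> \<le> q * (norm x)\<^sup>2" for x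
  proof -
    have "inner (T x) x \<le> b * (norm x)\<^sup>2"
      using K(2)[of x] pos by (simp add: b_def abs_le_iff distrib_right add_increasing2)
    with lower[of x] b show ?thesis
      by (simp add: S_def inner_diff_left power2_norm_eq_inner[symmetric] q_def abs_le_iff
          field_simps)
  qed
  then have "norm (S x) \<le> q * norm x" for x
    by (rule selfadjoint_norm_le[OF S])
  then have summable: "summable (\<lambda>n. (S ^^ n) y)" for y
    using q funpow_norm_le[of S q]
    by (intro summable_comparison_test'[OF summable_mult2[OF summable_geometric, of q "norm y"]])
      auto
  show ?thesis
  proof (rule surjI)
    fix y
    define z where "z = (\<Sum>n. (S ^^ n) y)"
    have "S z = (\<Sum>n. S ((S ^^ n) y))"
      unfolding z_def
      by (rule bounded_linear.suminf[OF selfadjoint_bop[OF S, THEN bop_bounded_linear] summable])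
    also have "\<dots> = z - y"
      using suminf_split_head[OF summable[of y]] by (simp add: z_def)
    finally show "T ((1 / b) *\<^sub>R z) = y"
      by (simp add: S_def bop_linear_simps[OF bop])
  qed
qed

lemma inj: "inj T"
proof (rule injI)
  fix x y
  assume "T x = T y"
  then have "m * norm (x - y) \<le> 0"
    using bop_coercive_norm_ge[OF bop lower, of "x - y"] by (simp add: bop_linear_simps[OF bop])
  with pos show "x = y"
    by (simp add: mult_le_0_iff)
qed

lemma bij: "bij T"
  using inj surj by (rule bijI)

lemma f_inv [simp]: "T (inv T y) = y"
  using surj by (rule surj_f_inv_f)

lemma inv_f [simp]: "inv T (T x) = x"
  using inj by (rule inv_f_f)

lemma inner_inv: "inner (inv T y) y = inner (T (inv T y)) (inv T y)"
  by (simp add: inner_commute)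

lemma selfadjoint_inv: "selfadjoint (inv T)"
proof (rule selfadjointI)
  have "norm (inv T y) \<le> norm y * (1 / m)" for y
    using bop_coercive_norm_ge[OF bop lower, of "inv T y"] pos
    by (simp add: field_simps)
  moreover have "inv T (x + y) = inv T x + inv T y" "inv T (r *\<^sub>R x) = r *\<^sub>R inv T x" for x y r
    by (metis f_inv inv_f bop_linear_simps(1)[OF bop],
        metis f_inv inv_f bop_linear_simps(5)[OF bop])
  ultimately have "bounded_linear (inv T)"
    by (intro bounded_linear_intro)
  moreover have "inv T (imult x) = imult (inv T x)" for x
    by (metis f_inv inv_f bop_imult[OF bop])
  ultimately show "inv T \<in> bop"
    by (rule bopI)
  show "inner (inv T x) y = inner x (inv T y)" for x y
    by (metis f_inv selfadjoint_inner[OF selfadjoint])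
qed

lemma inv_lower: "m * (norm (inv T y))\<^sup>2 \<le> inner (inv T y) y"
  using lower[of "inv T y"] by (simp add: inner_inv)

lemma pos_op_inv: "pos_op (inv T)"
  using inv_lower pos
  by (simp add: pos_op_iff_selfadjoint selfadjoint_inv) (meson order_trans zero_le_mult_iff
      zero_le_power2 less_imp_le)

lemma inv_upper: "inner (inv T y) y \<le> (1 / m) * (norm y)\<^sup>2"
proof -
  have "inner (inv T y) y \<le> norm (inv T y) * norm y"
    by (rule Cauchy_Schwarz_ineq2[THEN abs_le_D1])
  also have "\<dots> \<le> (norm y / m) * norm y"
    using bop_coercive_norm_ge[OF bop lower, of "inv T y"] pos
    by (intro mult_right_mono) (simp_all add: field_simps)
  finally show ?thesis
    by (simp add: power2_eq_square)
qed

lemma inv_lower_of_upper: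
  assumes M: "0 < M" and upper: "\<And>x. inner (T x) x \<le> M * (norm x)\<^sup>2"
  shows "(1 / M) * (norm y)\<^sup>2 \<le> inner (inv T y) y"
proof -
  have "(norm (T (inv T y)))\<^sup>2 \<le> (0 + M) * inner (T (inv T y)) (inv T y) - 0 * M * (norm (inv T y))\<^sup>2"
    by (rule selfadjoint_norm_sq_le[OF selfadjoint _ upper]) (simp add: inner_nonneg)
  with M show ?thesis
    by (simp add: inner_inv field_simps)
qed

end

section \<open>Positive square roots\<close>

lemma selfadjoint_contraction_sqrt_one_minus:
  fixes S :: "'a::chilbert \<Rightarrow> 'a"
  assumes S: "selfadjoint S" and contr: "\<And>x. norm (S x) \<le> norm x"
  defines "R \<equiv> blinfun_apply (sqrt_one_minus (Blinfun S))"
  shows "pos_op R" and "R (R x) = x - S x"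
    and "bounded_linear P \<Longrightarrow> (\<And>x. P (S x) = S (P x)) \<Longrightarrow> P (R x) = R (P x)"
proof -
  have "bounded_linear S"
    using S by (simp add: selfadjoint_def bop_bounded_linear)
  then have apply_L: "blinfun_apply (Blinfun S) = S"
    by (rule bounded_linear_Blinfun_apply)
  have L: "norm (Blinfun S) \<le> 1"
    by (rule norm_blinfun_bound) (simp_all add: apply_L contr)
  show commute: "P (R x) = R (P x)" if "bounded_linear P" "\<And>x. P (S x) = S (P x)" for P x
    unfolding R_def using sqrt_one_minus_commute[OF L] that by (simp add: apply_L)
  have "bounded_linear R"
    unfolding R_def by (rule blinfun.bounded_linear_right)
  moreover have "R (imult x) = imult (R x)" for x
    using commute[OF bounded_linear_imult] bop_imult[OF selfadjoint_bop[OF S]] by simp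
  ultimately have "R \<in> bop"
    by (rule bopI)
  moreover have "inner (R x) y = inner x (R y)" for x y
    unfolding R_def using sqrt_one_minus_symmetric[OF L]
    by (simp add: apply_L selfadjoint_inner[OF S])
  ultimately show "pos_op R"
    unfolding R_def using sqrt_one_minus_nonneg[OF L]
    by (simp add: pos_op_iff_selfadjoint selfadjoint_def)
  show "R (R x) = x - S x"
    using arg_cong[OF sqrt_one_minus_square[OF L], of "\<lambda>F. blinfun_apply F x"]
    by (simp add: R_def apply_L blinfun.diff_left)
qed

lemma pos_op_sqrt_exists:
  assumes T: "pos_op T"
  obtains R where "pos_op R" "\<And>x. R (R x) = T x"
    "\<And>P x. bounded_linear P \<Longrightarrow> (\<And>x. P (T x) = T (P x)) \<Longrightarrow> P (R x) = R (P x)"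
proof -
  note T_bop = selfadjoint_bop[OF pos_op_selfadjoint[OF T]]
  obtain K where K: "K > 0" "\<And>x. \<bar>inner (T x) x\<bar> \<le> K * (norm x)\<^sup>2"
    using bop_inner_le[OF T_bop] by blast
  define S where "S x = x - (1 / K) *\<^sub>R T x" for x
  have S: "selfadjoint S"
    unfolding S_def[abs_def]
    by (intro selfadjoint_diff selfadjoint_id selfadjoint_scaleR pos_op_selfadjoint T)
  have "\<bar>inner (S x) x\<bar> \<le> 1 * (norm x)\<^sup>2" for x
    using K(1) K(2)[of x] pos_op_inner_nonneg[OF T, of x]
    by (simp add: S_def inner_diff_left power2_norm_eq_inner abs_le_iff field_simps)
  then have contr: "norm (S x) \<le> norm x" for x
    using selfadjoint_norm_le[OF S] by fastforce
  define R0 where "R0 = blinfun_apply (sqrt_one_minus (Blinfun S))"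
  note R0 = selfadjoint_contraction_sqrt_one_minus[OF S contr, folded R0_def]
  have R0_scaleR: "R0 (c *\<^sub>R x) = c *\<^sub>R R0 x" for c x
    unfolding R0_def by (rule blinfun.scaleR_right)
  show ?thesis
  proof
    have "selfadjoint (\<lambda>x. sqrt K *\<^sub>R R0 x)"
      by (rule selfadjoint_scaleR[OF pos_op_selfadjoint[OF R0(1)]])
    moreover have "0 \<le> inner (sqrt K *\<^sub>R R0 x) x" for x
      using pos_op_inner_nonneg[OF R0(1), of x] K(1) by simp
    ultimately show "pos_op (\<lambda>x. sqrt K *\<^sub>R R0 x)"
      by (simp add: pos_op_iff_selfadjoint)
    show "sqrt K *\<^sub>R R0 (sqrt K *\<^sub>R R0 x) = T x" for x
      using R0(2)[of x] K(1) by (simp add: R0_scaleR S_def)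
    show "P (sqrt K *\<^sub>R R0 x) = sqrt K *\<^sub>R R0 (P x)"
      if P: "bounded_linear P" "\<And>x. P (T x) = T (P x)" for P x
    proof -
      have "P (S x) = S (P x)" for x
        using P by (simp add: S_def linear_simps[OF P(1)])
      then show ?thesis
        using R0(3)[OF P(1)] by (simp add: R0_def linear_simps[OF P(1)])
    qed
  qed
qed

text \<open>A positive square root that commutes with everything commuting with \<open>T\<close> commutes
  with any other positive square root \<open>R'\<close>; then \<open>(R + R')(R - R') = 0\<close> forces \<open>R = R'\<close>.\<close>

lemma pos_op_sqrt_unique:
  assumes R: "pos_op R" "\<And>x. R (R x) = T x"
    and comm: "\<And>P x. bounded_linear P \<Longrightarrow> (\<And>x. P (T x) = T (P x)) \<Longrightarrow> P (R x) = R (P x)"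
    and R': "pos_op R'" "\<And>x. R' (R' x) = T x"
  shows "R' = R"
proof
  fix y
  note bop_R = selfadjoint_bop[OF pos_op_selfadjoint[OF R(1)]]
    and bop_R' = selfadjoint_bop[OF pos_op_selfadjoint[OF R'(1)]]
  have "R' (T x) = T (R' x)" for x
    by (simp flip: R'(2))
  then have RR': "R' (R x) = R (R' x)" for x
    by (rule comm[OF bop_bounded_linear[OF bop_R']])
  define u where "u = R y - R' y"
  have "R u + R' u = 0"
    by (simp add: u_def bop_linear_simps[OF bop_R] bop_linear_simps[OF bop_R'] RR' R(2) R'(2))
  then have "inner (R u) u + inner (R' u) u = 0"
    by (metis inner_add_left inner_zero_left)
  then have "inner (R u) u = 0" "inner (R' u) u = 0"
    using pos_op_inner_nonneg[OF R(1), of u] pos_op_inner_nonneg[OF R'(1), of u] by linarith+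
  then have "R u = 0" "R' u = 0"
    using pos_op_eq_zero[OF R(1)] pos_op_eq_zero[OF R'(1)] by blast+
  have "inner u u = inner (R y - R' y) u"
    by (simp add: u_def)
  also have "\<dots> = inner y (R u - R' u)"
    by (simp add: inner_diff_left inner_diff_right selfadjoint_inner[OF pos_op_selfadjoint[OF R(1)]]
        selfadjoint_inner[OF pos_op_selfadjoint[OF R'(1)]])
  also have "\<dots> = 0"
    by (simp add: \<open>R u = 0\<close> \<open>R' u = 0\<close>)
  finally show "R' y = R y"
    by (simp add: u_def)
qed

lemma op_sqrt_eq:
  assumes R: "pos_op R" "\<And>x. R (R x) = T x"
    and comm: "\<And>P x. bounded_linear P \<Longrightarrow> (\<And>x. P (T x) = T (P x)) \<Longrightarrow> P (R x) = R (P x)"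
  shows "op_sqrt T = R"
  unfolding op_sqrt_def
proof (rule the_equality)
  show "pos_op R \<and> R \<circ> R = T"
    using R by (simp add: comp_def)
  show "S = R" if S: "pos_op S \<and> S \<circ> S = T" for S
  proof (rule pos_op_sqrt_unique[OF R comm])
    show "pos_op S"
      using S by simp
    show "S (S x) = T x" for x
      using fun_cong[OF conjunct2[OF S], of x] by simp
  qed
qed

lemma op_sqrt_cases:
  assumes T: "pos_op T"
  obtains "pos_op (op_sqrt T)" "\<And>x. op_sqrt T (op_sqrt T x) = T x"
    "\<And>P x. bounded_linear P \<Longrightarrow> (\<And>x. P (T x) = T (P x)) \<Longrightarrow> P (op_sqrt T x) = op_sqrt T (P x)"
proof (rule pos_op_sqrt_exists[OF T])
  fix R
  assume R: "pos_op R" "\<And>x. R (R x) = T x"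
    "\<And>P x. bounded_linear P \<Longrightarrow> (\<And>x. P (T x) = T (P x)) \<Longrightarrow> P (R x) = R (P x)"
  show thesis
  proof (rule that)
    show "pos_op (op_sqrt T)"
      using R(1) by (simp add: op_sqrt_eq[OF R])
    show "op_sqrt T (op_sqrt T x) = T x" for x
      using R(2) by (simp add: op_sqrt_eq[OF R])
    show "P (op_sqrt T x) = op_sqrt T (P x)" if "bounded_linear P" "\<And>x. P (T x) = T (P x)" for P x
      using R(3)[OF that] by (simp add: op_sqrt_eq[OF R])
  qed
qed

lemma pos_op_op_sqrt: "pos_op T \<Longrightarrow> pos_op (op_sqrt T)"
  by (erule op_sqrt_cases)

lemma op_sqrt_square: "pos_op T \<Longrightarrow> op_sqrt T (op_sqrt T x) = T x"
  by (erule op_sqrt_cases) simp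

lemma op_sqrt_commute:
  "pos_op T \<Longrightarrow> bounded_linear P \<Longrightarrow> (\<And>x. P (T x) = T (P x)) \<Longrightarrow> P (op_sqrt T x) = op_sqrt T (P x)"
  by (erule op_sqrt_cases) simp

lemma pos_op_comp_commute:
  assumes P: "pos_op P" and Q: "pos_op Q" and comm: "\<And>x. P (Q x) = Q (P x)"
  shows "pos_op (\<lambda>x. P (Q x))"
proof -
  let ?q = "op_sqrt Q"
  have P_q: "P (?q x) = ?q (P x)" for x
    using pos_op_selfadjoint[OF P] comm
    by (intro op_sqrt_commute[OF Q] bop_bounded_linear selfadjoint_bop)
  have "inner (P (Q y)) y = inner (P (?q (?q y))) y" for y
    by (simp add: op_sqrt_square[OF Q])
  also have "\<dots> y = inner (P (?q y)) (?q y)" for y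
    by (simp add: P_q selfadjoint_inner[OF pos_op_selfadjoint[OF pos_op_op_sqrt[OF Q]]])
  finally have "0 \<le> inner (P (Q y)) y" for y
    by (simp add: pos_op_inner_nonneg[OF P])
  moreover have "selfadjoint (\<lambda>x. P (Q x))"
    using pos_op_selfadjoint[OF P] pos_op_selfadjoint[OF Q] comm by (rule selfadjoint_comp_commute)
  ultimately show ?thesis
    by (simp add: pos_op_iff_selfadjoint)
qed

lemma pos_op_congruence:
  assumes P: "pos_op P" and S: "selfadjoint S"
  shows "pos_op (\<lambda>x. S (P (S x)))"
proof -
  have "inner (S (P (S x))) x = inner (P (S x)) (S x)" for x
    by (rule selfadjoint_inner[OF S])
  then show ?thesis
    using selfadjoint_congruence[OF S pos_op_selfadjoint[OF P]] pos_op_inner_nonneg[OF P]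
    by (simp add: pos_op_iff_selfadjoint)
qed

section \<open>Monotonicity of the square root\<close>

lemma bop_numerical_range_inf:
  fixes H :: "'a::chilbert \<Rightarrow> 'a" and v :: 'a
  assumes H: "H \<in> bop" and v: "v \<noteq> 0"
  obtains \<mu> where "\<And>x. \<mu> * (norm x)\<^sup>2 \<le> inner (H x) x"
    and "\<And>\<epsilon>. 0 < \<epsilon> \<Longrightarrow> \<exists>z. norm z = 1 \<and> inner (H z) z < \<mu> + \<epsilon>"
proof -
  define N where "N = {inner (H z) z | z. norm z = 1}"
  obtain K where K: "\<And>z. \<bar>inner (H z) z\<bar> \<le> K * (norm z)\<^sup>2"
    using bop_inner_le[OF H] by blast
  have "norm ((1 / norm v) *\<^sub>R v) = 1"
    using v by simp
  then have "N \<noteq> {}"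
    unfolding N_def by blast
  moreover have "bdd_below N"
  proof (rule bdd_belowI)
    fix a
    assume "a \<in> N"
    then obtain z where "norm z = 1" "a = inner (H z) z"
      by (auto simp: N_def)
    with K[of z] show "- K \<le> a"
      by (simp add: abs_le_iff)
  qed
  ultimately have N: "N \<noteq> {}" "bdd_below N" .
  show ?thesis
  proof (rule that)
    show "Inf N * (norm x)\<^sup>2 \<le> inner (H x) x" for x
    proof (cases "x = 0")
      case False
      define u where "u = (1 / norm x) *\<^sub>R x"
      have "norm u = 1"
        using False by (simp add: u_def)
      then have "inner (H u) u \<in> N"
        unfolding N_def by blast
      then have "Inf N \<le> inner (H u) u"
        by (rule cInf_lower[OF _ N(2)])
      with False show ?thesis
        by (simp add: u_def bop_linear_simps[OF H] power2_eq_square field_simps)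
    qed (simp add: bop_linear_simps[OF H])
    show "\<exists>z. norm z = 1 \<and> inner (H z) z < Inf N + \<epsilon>" if "0 < \<epsilon>" for \<epsilon>
    proof -
      have "\<exists>a\<in>N. a < Inf N + \<epsilon>"
        using cInf_less_iff[OF N, of "Inf N + \<epsilon>"] that by simp
      then show ?thesis
        unfolding N_def by blast
    qed
  qed
qed

lemma selfadjoint_approx_eigenvalue:
  fixes H :: "'a::chilbert \<Rightarrow> 'a" and v :: 'a
  assumes H: "selfadjoint H" and v: "v \<noteq> 0"
  obtains \<mu> where "\<And>x. \<mu> * (norm x)\<^sup>2 \<le> inner (H x) x"
    and "\<And>\<epsilon>. 0 < \<epsilon> \<Longrightarrow> \<exists>z. norm z = 1 \<and> norm (H z - \<mu> *\<^sub>R z) < \<epsilon>"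
proof -
  obtain \<mu> where lower: "\<And>x. \<mu> * (norm x)\<^sup>2 \<le> inner (H x) x"
    and bottom: "\<And>\<epsilon>. 0 < \<epsilon> \<Longrightarrow> \<exists>z. norm z = 1 \<and> inner (H z) z < \<mu> + \<epsilon>"
    using bop_numerical_range_inf[OF selfadjoint_bop[OF H] v] by blast
  have "pos_op (\<lambda>x. H x - \<mu> *\<^sub>R x)"
    using lower by (simp add: pos_op_iff_selfadjoint selfadjoint_diff H selfadjoint_scaleR_id
        inner_diff_left power2_norm_eq_inner)
  then obtain b where b: "b > 0" "\<And>x. (norm (H x - \<mu> *\<^sub>R x))\<^sup>2 \<le> b * inner (H x - \<mu> *\<^sub>R x) x"
    using pos_op_norm_sq_le by blast
  show ?thesis
  proof (rule that[OF lower])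
    fix \<epsilon> :: real
    assume "0 < \<epsilon>"
    then obtain z where z: "norm z = 1" "inner (H z) z < \<mu> + \<epsilon>\<^sup>2 / b"
      using bottom[of "\<epsilon>\<^sup>2 / b"] b(1) by auto
    then have "(norm (H z - \<mu> *\<^sub>R z))\<^sup>2 < \<epsilon>\<^sup>2"
      using b(2)[of z] b(1)
      by (simp add: inner_diff_left power2_norm_eq_inner[symmetric] field_simps)
    with \<open>0 < \<epsilon>\<close> z(1) show "\<exists>z. norm z = 1 \<and> norm (H z - \<mu> *\<^sub>R z) < \<epsilon>"
      using power2_less_imp_less by fastforce
  qed
qed

text \<open>If \<open>SH + HS \<ge> 0\<close> with \<open>S \<ge> \<delta> > 0\<close>, then \<open>H \<ge> 0\<close>: test the anticommutator on an
  approximate eigenvector for the bottom \<open>\<mu>\<close> of the numerical range of \<open>H\<close>, where it is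
  close to \<open>2\<mu>\<langle>Sz, z\<rangle> \<le> 2\<mu>\<delta>\<close>.\<close>

lemma selfadjoint_nonneg_of_anticommutator:
  assumes H: "selfadjoint H" and S: "selfadjoint S"
    and \<delta>: "0 < \<delta>" "\<And>z. \<delta> * (norm z)\<^sup>2 \<le> inner (S z) z"
    and anticomm: "\<And>z. 0 \<le> inner (H z) (S z)"
  shows "0 \<le> inner (H x) x"
proof (rule ccontr)
  assume neg: "\<not> 0 \<le> inner (H x) x"
  then have "x \<noteq> 0"
    by auto
  then obtain \<mu> where \<mu>: "\<And>x. \<mu> * (norm x)\<^sup>2 \<le> inner (H x) x"
    and approx: "\<And>\<epsilon>. 0 < \<epsilon> \<Longrightarrow> \<exists>z. norm z = 1 \<and> norm (H z - \<mu> *\<^sub>R z) < \<epsilon>"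
    using selfadjoint_approx_eigenvalue[OF H] by blast
  have "\<mu> * (norm x)\<^sup>2 < 0"
    using \<mu>[of x] neg by linarith
  then have "\<mu> < 0"
    by (simp add: mult_less_0_iff)
  obtain \<sigma> where \<sigma>: "\<sigma> > 0" "\<And>z. norm (S z) \<le> norm z * \<sigma>"
    using bounded_linear.pos_bounded[OF bop_bounded_linear[OF selfadjoint_bop[OF S]]] by blast
  have "0 < - \<mu> * \<delta> / \<sigma>"
    using \<open>\<mu> < 0\<close> \<delta>(1) \<sigma>(1) by (simp add: divide_neg_pos mult_neg_pos)
  then obtain z where z: "norm z = 1" "norm (H z - \<mu> *\<^sub>R z) < - \<mu> * \<delta> / \<sigma>"
    using approx by blast
  have "0 \<le> inner (H z - \<mu> *\<^sub>R z) (S z) + \<mu> * inner z (S z)"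
    using anticomm[of z] by (simp add: inner_diff_left)
  also have "\<dots> \<le> norm (H z - \<mu> *\<^sub>R z) * \<sigma> + \<mu> * \<delta>"
  proof (rule add_mono)
    have "inner (H z - \<mu> *\<^sub>R z) (S z) \<le> norm (H z - \<mu> *\<^sub>R z) * norm (S z)"
      by (rule Cauchy_Schwarz_ineq2[THEN abs_le_D1])
    also have "\<dots> \<le> norm (H z - \<mu> *\<^sub>R z) * \<sigma>"
      using \<sigma>(2)[of z] z(1) by (intro mult_left_mono) simp_all
    finally show "inner (H z - \<mu> *\<^sub>R z) (S z) \<le> norm (H z - \<mu> *\<^sub>R z) * \<sigma>" .
    show "\<mu> * inner z (S z) \<le> \<mu> * \<delta>"
      using \<delta>(2)[of z] \<open>\<mu> < 0\<close> by (simp add: z(1) inner_commute mult_left_mono_neg)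
  qed
  also have "\<dots> < 0"
    using z(2) \<sigma>(1) by (simp add: field_simps)
  finally show False
    by simp
qed

lemma pos_op_le_of_square_le:
  assumes r: "pos_op r" and D: "selfadjoint D"
    and \<delta>: "0 < \<delta>" "\<And>x. \<delta> * (norm x)\<^sup>2 \<le> inner (D x) x"
    and sq: "\<And>x. norm (r x) \<le> norm (D x)"
  shows "inner (r x) x \<le> inner (D x) x"
proof -
  have "0 \<le> inner (D x - r x) x"
  proof (rule selfadjoint_nonneg_of_anticommutator)
    show "selfadjoint (\<lambda>x. D x - r x)" "selfadjoint (\<lambda>x. D x + r x)"
      using D pos_op_selfadjoint[OF r] by (simp_all add: selfadjoint_diff selfadjoint_add)
    show "\<delta> * (norm z)\<^sup>2 \<le> inner (D z + r z) z" for z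
      using \<delta>(2)[of z] pos_op_inner_nonneg[OF r, of z] by (simp add: inner_add_left)
    show "0 \<le> inner (D z - r z) (D z + r z)" for z
    proof -
      have "inner (D z - r z) (D z + r z) = (norm (D z))\<^sup>2 - (norm (r z))\<^sup>2"
        by (simp add: inner_diff_left inner_add_right power2_norm_eq_inner
            inner_commute[of "r z" "D z"])
      then show ?thesis
        using power_mono[OF sq[of z] norm_ge_zero, of 2] by simp
    qed
  qed (rule \<delta>(1))
  then show ?thesis
    by (simp add: inner_diff_left)
qed

section \<open>The geometric mean\<close>

context coercive_selfadjoint
begin

lemma op_sqrt_inv_commute: "op_sqrt T (inv T x) = inv T (op_sqrt T x)"
proof -
  have "op_sqrt T (inv T x) = inv T (T (op_sqrt T (inv T x)))"
    by simp
  also have "T (op_sqrt T (inv T x)) = op_sqrt T x"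
    using op_sqrt_commute[OF pos_op bop_bounded_linear[OF bop] refl, of "inv T x"] by simp
  finally show ?thesis .
qed

lemma selfadjoint_op_sqrt_inv: "selfadjoint (\<lambda>x. op_sqrt T (inv T x))"
  using pos_op_selfadjoint[OF pos_op_op_sqrt[OF pos_op]] selfadjoint_inv op_sqrt_inv_commute
  by (rule selfadjoint_comp_commute)

lemma op_inv_op_sqrt: "op_inv (op_sqrt T) = (\<lambda>x. op_sqrt T (inv T x))"
  unfolding op_inv_def
proof (rule inv_equality)
  show "op_sqrt T (inv T (op_sqrt T x)) = x" for x
    by (simp add: op_sqrt_inv_commute op_sqrt_square[OF pos_op])
  show "op_sqrt T (op_sqrt T (inv T y)) = y" for y
    by (simp add: op_sqrt_square[OF pos_op])
qed

lemma inv_coercive: "\<exists>\<delta>>0. \<forall>y. \<delta> * (norm y)\<^sup>2 \<le> inner (inv T y) y"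
proof -
  obtain K where K: "\<And>x. \<bar>inner (T x) x\<bar> \<le> K * (norm x)\<^sup>2" "0 < K"
    using bop_inner_le[OF bop] by blast
  have "(1 / K) * (norm y)\<^sup>2 \<le> inner (inv T y) y" for y
    by (rule inv_lower_of_upper[OF K(2)]) (use K(1) in \<open>simp add: abs_le_iff\<close>)
  with K(2) show ?thesis
    by (intro exI[of _ "1 / K"]) simp
qed

lemma norm_op_sqrt_congruence_le:
  assumes Y: "pos_op Y" and Y_le: "\<And>y. inner (Y y) y \<le> \<kappa>\<^sup>2 * inner (inv T y) y"
  defines "si \<equiv> \<lambda>x. op_sqrt T (inv T x)"
  shows "norm (op_sqrt (\<lambda>x. si (Y (si x))) y) \<le> norm (\<kappa> *\<^sub>R inv T y)"
proof (rule power2_le_imp_le)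
  let ?r = "op_sqrt (\<lambda>x. si (Y (si x)))"
  have si: "selfadjoint si"
    unfolding si_def by (rule selfadjoint_op_sqrt_inv)
  have C: "pos_op (\<lambda>x. si (Y (si x)))"
    using Y si by (rule pos_op_congruence)
  have r: "selfadjoint ?r"
    by (rule pos_op_selfadjoint[OF pos_op_op_sqrt[OF C]])
  have "(norm (?r y))\<^sup>2 = inner (?r (?r y)) y"
    by (simp add: power2_norm_eq_inner selfadjoint_inner[OF r])
  also have "\<dots> = inner (Y (si y)) (si y)"
    by (simp add: op_sqrt_square[OF C] selfadjoint_inner[OF si])
  also have "\<dots> \<le> \<kappa>\<^sup>2 * inner (inv T (si y)) (si y)"
    by (rule Y_le)
  also have "inner (inv T (si y)) (si y) = inner (inv T y) (inv T y)"
    using selfadjoint_inner[OF si, of "si (si y)" "si y"]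
    by (simp add: si_def op_sqrt_inv_commute op_sqrt_square[OF pos_op])
  also have "\<kappa>\<^sup>2 * inner (inv T y) (inv T y) = (norm (\<kappa> *\<^sub>R inv T y))\<^sup>2"
    by (simp add: power_mult_distrib power2_norm_eq_inner)
  finally show "(norm (?r y))\<^sup>2 \<le> (norm (\<kappa> *\<^sub>R inv T y))\<^sup>2" .
qed simp

text \<open>For \<open>s = \<surd>T\<close> the hypothesis gives \<open>s\<inverse> Y s\<inverse> \<le> \<kappa>\<^sup>2 T\<inverse>\<^sup>2\<close>, hence
  \<open>\<surd>(s\<inverse> Y s\<inverse>) \<le> \<kappa> T\<inverse>\<close> by monotonicity of the square root.\<close>

lemma op_sqrt_congruence_le:
  assumes Y: "pos_op Y" and \<kappa>: "0 < \<kappa>" and Y_le: "\<And>y. inner (Y y) y \<le> \<kappa>\<^sup>2 * inner (inv T y) y"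
  defines "si \<equiv> \<lambda>x. op_sqrt T (inv T x)"
  shows "inner (op_sqrt (\<lambda>x. si (Y (si x))) x) x \<le> \<kappa> * inner (inv T x) x"
proof -
  obtain \<delta> where \<delta>: "0 < \<delta>" "\<And>y. \<delta> * (norm y)\<^sup>2 \<le> inner (inv T y) y"
    using inv_coercive by blast
  have "pos_op (op_sqrt (\<lambda>x. si (Y (si x))))"
    unfolding si_def by (intro pos_op_op_sqrt pos_op_congruence[OF Y] selfadjoint_op_sqrt_inv)
  then have "inner (op_sqrt (\<lambda>x. si (Y (si x))) x) x \<le> inner (\<kappa> *\<^sub>R inv T x) x"
  proof (rule pos_op_le_of_square_le)
    show "selfadjoint (\<lambda>x. \<kappa> *\<^sub>R inv T x)"
      by (rule selfadjoint_scaleR[OF selfadjoint_inv])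
    show "\<kappa> * \<delta> * (norm y)\<^sup>2 \<le> inner (\<kappa> *\<^sub>R inv T y) y" for y
      using mult_left_mono[OF \<delta>(2)[of y] less_imp_le[OF \<kappa>]] by (simp add: mult.assoc)
    show "norm (op_sqrt (\<lambda>x. si (Y (si x))) y) \<le> norm (\<kappa> *\<^sub>R inv T y)" for y
      unfolding si_def by (rule norm_op_sqrt_congruence_le[OF Y Y_le])
  qed (use \<kappa> \<delta>(1) in simp)
  then show ?thesis
    by simp
qed

lemma gmean_le:
  assumes Y: "pos_op Y" and \<kappa>: "0 < \<kappa>" and Y_le: "\<And>y. inner (Y y) y \<le> \<kappa>\<^sup>2 * inner (inv T y) y"
  shows "loewner_le (gmean T Y) (\<lambda>y. \<kappa> *\<^sub>R y)"
proof -
  define s where "s = op_sqrt T"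
  define r where "r = op_sqrt (\<lambda>x. s (inv T (Y (s (inv T x)))))"
  have s: "selfadjoint s"
    unfolding s_def by (rule pos_op_selfadjoint[OF pos_op_op_sqrt[OF pos_op]])
  have r: "selfadjoint r"
    unfolding r_def s_def
    by (intro pos_op_selfadjoint pos_op_op_sqrt pos_op_congruence[OF Y] selfadjoint_op_sqrt_inv)
  have "gmean T Y = (\<lambda>x. s (r (s x)))"
    by (simp add: gmean_def op_inv_op_sqrt s_def r_def comp_def)
  moreover have "inner (s (r (s x))) x \<le> inner (\<kappa> *\<^sub>R x) x" for x
  proof -
    have "inner (s (r (s x))) x = inner (r (s x)) (s x)"
      by (rule selfadjoint_inner[OF s])
    also have "\<dots> \<le> \<kappa> * inner (inv T (s x)) (s x)"
      using op_sqrt_congruence_le[OF Y \<kappa> Y_le] by (simp add: r_def s_def)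
    also have "inner (inv T (s x)) (s x) = inner x x"
      using selfadjoint_inner[OF s, of "inv T (s x)" x]
      by (simp add: s_def op_sqrt_inv_commute[symmetric] op_sqrt_square[OF pos_op])
    finally show ?thesis
      by simp
  qed
  ultimately show ?thesis
    by (simp add: loewner_le_iff_inner selfadjoint_congruence[OF s r] selfadjoint_scaleR_id)
qed

end

section \<open>Unital positive maps\<close>

lemma loewner_le_scaleR_id_left:
  "loewner_le (\<lambda>x. c *\<^sub>R x) T \<longleftrightarrow> selfadjoint T \<and> (\<forall>x. c * (norm x)\<^sup>2 \<le> inner (T x) x)"
proof -
  have "selfadjoint (\<lambda>x. T x - c *\<^sub>R x) \<longleftrightarrow> selfadjoint T" if "T \<in> bop"
    using selfadjoint_add[of "\<lambda>x. T x - c *\<^sub>R x" "\<lambda>x. c *\<^sub>R x"] selfadjoint_diff[of T "\<lambda>x. c *\<^sub>R x"]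
    by (auto simp: selfadjoint_scaleR_id)
  then show ?thesis
    by (auto simp: loewner_le_def pos_op_iff_selfadjoint bop_scaleR_id inner_diff_left
        power2_norm_eq_inner selfadjoint_bop)
qed

lemma loewner_le_scaleR_id_right:
  "loewner_le T (\<lambda>x. c *\<^sub>R x) \<longleftrightarrow> selfadjoint T \<and> (\<forall>x. inner (T x) x \<le> c * (norm x)\<^sup>2)"
proof -
  have "selfadjoint (\<lambda>x. c *\<^sub>R x - T x) \<longleftrightarrow> selfadjoint T" if "T \<in> bop"
    using selfadjoint_diff[of "\<lambda>x. c *\<^sub>R x" "\<lambda>x. c *\<^sub>R x - T x"] selfadjoint_diff[of "\<lambda>x. c *\<^sub>R x" T]
    by (auto simp: selfadjoint_scaleR_id)
  then show ?thesis
    by (auto simp: loewner_le_def pos_op_iff_selfadjoint bop_scaleR_id inner_diff_left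
        power2_norm_eq_inner selfadjoint_bop)
qed

context
  fixes \<Phi> :: "('a::chilbert \<Rightarrow> 'a) \<Rightarrow> ('b::chilbert \<Rightarrow> 'b)"
  assumes \<Phi>: "unital_pos_map \<Phi>"
begin

lemma unital_pos_map_bop: "T \<in> bop \<Longrightarrow> \<Phi> T \<in> bop"
  and unital_pos_map_add: "S \<in> bop \<Longrightarrow> T \<in> bop \<Longrightarrow> \<Phi> (\<lambda>x. S x + T x) = (\<lambda>y. \<Phi> S y + \<Phi> T y)"
  and unital_pos_map_pos_op: "pos_op T \<Longrightarrow> pos_op (\<Phi> T)"
  using \<Phi> by (simp_all add: unital_pos_map_def)

lemma unital_pos_map_scaleR:
  assumes "T \<in> bop"
  shows "\<Phi> (\<lambda>x. r *\<^sub>R T x) = (\<lambda>y. r *\<^sub>R \<Phi> T y)"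
proof -
  have "\<Phi> (\<lambda>x. cscale (complex_of_real r) (T x)) = (\<lambda>y. cscale (complex_of_real r) (\<Phi> T y))"
    using \<Phi> assms unfolding unital_pos_map_def by blast
  then show ?thesis
    by simp
qed

lemma unital_pos_map_scaleR_id: "\<Phi> (\<lambda>x. r *\<^sub>R x) = (\<lambda>y. r *\<^sub>R y)"
  using \<Phi> unital_pos_map_scaleR[OF bop_id(2), of r] by (simp add: unital_pos_map_def id_def)

lemma unital_pos_map_diff:
  assumes S: "S \<in> bop" and T: "T \<in> bop"
  shows "\<Phi> (\<lambda>x. S x - T x) = (\<lambda>y. \<Phi> S y - \<Phi> T y)"
proof -
  have "\<Phi> (\<lambda>x. S x - T x) = \<Phi> (\<lambda>x. S x + (-1) *\<^sub>R T x)"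
    by simp
  also have "\<dots> = (\<lambda>y. \<Phi> S y + \<Phi> (\<lambda>x. (-1) *\<^sub>R T x) y)"
    by (rule unital_pos_map_add[OF S bop_scaleR[OF T]])
  finally show ?thesis
    by (simp only: unital_pos_map_scaleR[OF T]) simp
qed

lemma unital_pos_map_loewner_le: "loewner_le S T \<Longrightarrow> loewner_le (\<Phi> S) (\<Phi> T)"
  by (simp add: loewner_le_def unital_pos_map_bop flip: unital_pos_map_diff)
    (simp add: unital_pos_map_pos_op)

text \<open>A positive map preserves self-adjointness, since \<open>T + K \<ge> 0\<close> for \<open>K\<close> large.\<close>

lemma unital_pos_map_selfadjoint:
  assumes T: "selfadjoint T"
  shows "selfadjoint (\<Phi> T)"
proof -
  obtain K where K: "\<And>x. \<bar>inner (T x) x\<bar> \<le> K * (norm x)\<^sup>2"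
    using bop_inner_le[OF selfadjoint_bop[OF T]] by blast
  have "0 \<le> inner (T x + K *\<^sub>R x) x" for x
    using K[of x] unfolding abs_le_iff by (simp add: inner_add_left power2_norm_eq_inner)
  then have "pos_op (\<lambda>x. T x + K *\<^sub>R x)"
    by (simp add: pos_op_iff_selfadjoint selfadjoint_add T selfadjoint_scaleR_id)
  then have "pos_op (\<Phi> (\<lambda>x. T x + K *\<^sub>R x))"
    by (rule unital_pos_map_pos_op)
  then have "pos_op (\<lambda>y. \<Phi> T y + K *\<^sub>R y)"
    by (simp add: unital_pos_map_add[OF selfadjoint_bop[OF T] bop_scaleR_id]
        unital_pos_map_scaleR_id)
  then have "selfadjoint (\<lambda>y. (\<Phi> T y + K *\<^sub>R y) - K *\<^sub>R y)"
    by (intro selfadjoint_diff pos_op_selfadjoint selfadjoint_scaleR_id)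
  then show ?thesis
    by simp
qed

lemma unital_pos_map_lower:
  "selfadjoint A \<Longrightarrow> (\<And>x. c * (norm x)\<^sup>2 \<le> inner (A x) x) \<Longrightarrow> c * (norm y)\<^sup>2 \<le> inner (\<Phi> A y) y"
  using unital_pos_map_loewner_le[of "\<lambda>x. c *\<^sub>R x" A]
  by (simp add: loewner_le_scaleR_id_left unital_pos_map_scaleR_id)

lemma unital_pos_map_upper:
  "selfadjoint A \<Longrightarrow> (\<And>x. inner (A x) x \<le> c * (norm x)\<^sup>2) \<Longrightarrow> inner (\<Phi> A y) y \<le> c * (norm y)\<^sup>2"
  using unital_pos_map_loewner_le[of A "\<lambda>x. c *\<^sub>R x"]
  by (simp add: loewner_le_scaleR_id_right unital_pos_map_scaleR_id)

end

section \<open>Kantorovich inequalities\<close>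

definition kantorovich_const :: "real \<Rightarrow> real \<Rightarrow> real" where
  "kantorovich_const m M = (M + m) / (2 * sqrt (M * m))"

lemma kantorovich_const_pos: "0 < m \<Longrightarrow> 0 < M \<Longrightarrow> 0 < kantorovich_const m M"
  by (simp add: kantorovich_const_def)

lemma kantorovich_const_square:
  "0 < m \<Longrightarrow> 0 < M \<Longrightarrow> M * m * (kantorovich_const m M)\<^sup>2 = ((M + m) / 2)\<^sup>2"
  by (simp add: kantorovich_const_def power_divide power_mult_distrib)

lemma kantorovich_const_mult_sqrt:
  "0 < m \<Longrightarrow> 0 < M \<Longrightarrow> kantorovich_const m M * sqrt (M * m) = (M + m) / 2"
  by (simp add: kantorovich_const_def)

lemma kantorovich_const_inverse:
  "0 < m \<Longrightarrow> 0 < M \<Longrightarrow> kantorovich_const (1 / M) (1 / m) = kantorovich_const m M"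
  by (simp add: kantorovich_const_def real_sqrt_divide field_simps)

text \<open>Evaluate \<open>(T - c) T\<inverse> (T - c) \<ge> 0\<close>.\<close>

lemma (in coercive_selfadjoint) tangent_le_inv:
  "2 * c * (norm y)\<^sup>2 - inner (T y) y \<le> c\<^sup>2 * inner (inv T y) y"
proof -
  have "0 \<le> inner (inv T (T y - c *\<^sub>R y)) (T y - c *\<^sub>R y)"
    by (rule pos_op_inner_nonneg[OF pos_op_inv])
  also have "inv T (T y - c *\<^sub>R y) = y - c *\<^sub>R inv T y"
    by (simp add: bop_linear_simps[OF selfadjoint_bop[OF selfadjoint_inv]])
  also have "inner (inv T y) (T y) = inner y y"
    using selfadjoint_inner[OF selfadjoint, of "inv T y" y] by simp
  then have "inner (y - c *\<^sub>R inv T y) (T y - c *\<^sub>R y) =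
      inner (T y) y - 2 * c * inner y y + c\<^sup>2 * inner (inv T y) y"
    by (simp add: inner_diff_left inner_diff_right inner_commute[of y "T y"] power2_eq_square
        algebra_simps)
  finally show ?thesis
    by (simp add: power2_norm_eq_inner)
qed

locale kantorovich = coercive_selfadjoint A m for A :: "'a::chilbert \<Rightarrow> 'a" and m +
  fixes M :: real
  assumes less: "m < M" and upper: "\<And>x. inner (A x) x \<le> M * (norm x)\<^sup>2"
begin

lemma pos_M: "0 < M"
  using pos less by simp

lemma kantorovich_inv:
  "kantorovich (inv A) (1 / M) (1 / m)"
proof
  show "selfadjoint (inv A)" "0 < 1 / M" "1 / M < 1 / m"
    using selfadjoint_inv pos less by (simp_all add: frac_less2)
  show "1 / M * (norm x)\<^sup>2 \<le> inner (inv A x) x" for x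
    using inv_lower_of_upper[OF pos_M upper] .
  show "inner (inv A x) x \<le> 1 / m * (norm x)\<^sup>2" for x
    by (rule inv_upper)
qed

lemma pos_op_square_bound: "pos_op (\<lambda>x. (M + m) *\<^sub>R A x - (M * m) *\<^sub>R x - A (A x))"
proof -
  have "0 \<le> inner ((M + m) *\<^sub>R A x - (M * m) *\<^sub>R x - A (A x)) x" for x
    using selfadjoint_norm_sq_le[OF selfadjoint lower upper, of x]
    by (simp add: inner_diff_left selfadjoint_inner_square[OF selfadjoint] power2_norm_eq_inner
        algebra_simps)
  then show ?thesis
    by (simp add: pos_op_iff_selfadjoint selfadjoint_diff selfadjoint_scaleR selfadjoint
        selfadjoint_scaleR_id selfadjoint_square)
qed

lemma pos_op_inverse_bound: "pos_op (\<lambda>x. (M + m) *\<^sub>R x - A x - (M * m) *\<^sub>R inv A x)"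
proof -
  define Q where "Q x = (M + m) *\<^sub>R A x - (M * m) *\<^sub>R x - A (A x)" for x
  have Q: "pos_op Q"
    unfolding Q_def[abs_def] by (rule pos_op_square_bound)
  have inv_Q: "inv A (Q x) = (M + m) *\<^sub>R x - A x - (M * m) *\<^sub>R inv A x" for x
    by (simp add: Q_def bop_linear_simps[OF selfadjoint_bop[OF selfadjoint_inv]])
  have "Q (inv A x) = (M + m) *\<^sub>R x - A x - (M * m) *\<^sub>R inv A x" for x
    by (simp add: Q_def)
  then have "pos_op (\<lambda>x. inv A (Q x))"
    using pos_op_comp_commute[OF pos_op_inv Q] inv_Q by simp
  then show ?thesis
    by (simp add: inv_Q)
qed

context
  fixes \<Phi> :: "('a \<Rightarrow> 'a) \<Rightarrow> ('b::chilbert \<Rightarrow> 'b)"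
  assumes \<Phi>: "unital_pos_map \<Phi>"
begin

lemma map_inverse_bound: "M * m * inner (\<Phi> (inv A) y) y \<le> (M + m) * (norm y)\<^sup>2 - inner (\<Phi> A y) y"
proof -
  have "\<Phi> (\<lambda>x. (M + m) *\<^sub>R x - A x - (M * m) *\<^sub>R inv A x) =
      (\<lambda>y. (M + m) *\<^sub>R y - \<Phi> A y - (M * m) *\<^sub>R \<Phi> (inv A) y)"
    using selfadjoint_bop[OF selfadjoint] selfadjoint_bop[OF selfadjoint_inv]
    by (simp add: unital_pos_map_diff[OF \<Phi>] unital_pos_map_scaleR[OF \<Phi>]
        unital_pos_map_scaleR_id[OF \<Phi>] bop_diff bop_scaleR bop_scaleR_id)
  then show ?thesis
    using pos_op_inner_nonneg[OF unital_pos_map_pos_op[OF \<Phi> pos_op_inverse_bound], of y]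
    by (simp add: inner_diff_left power2_norm_eq_inner algebra_simps)
qed

lemma map_square_bound: "inner (\<Phi> (A \<circ> A) y) y \<le> (M + m) * inner (\<Phi> A y) y - M * m * (norm y)\<^sup>2"
proof -
  have "\<Phi> (\<lambda>x. (M + m) *\<^sub>R A x - (M * m) *\<^sub>R x - A (A x)) =
      (\<lambda>y. (M + m) *\<^sub>R \<Phi> A y - (M * m) *\<^sub>R y - \<Phi> (A \<circ> A) y)"
    using selfadjoint_bop[OF selfadjoint] selfadjoint_bop[OF selfadjoint_square[OF selfadjoint]]
    by (simp add: unital_pos_map_diff[OF \<Phi>] unital_pos_map_scaleR[OF \<Phi>]
        unital_pos_map_scaleR_id[OF \<Phi>] bop_diff bop_scaleR bop_scaleR_id comp_def)
  then show ?thesis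
    using pos_op_inner_nonneg[OF unital_pos_map_pos_op[OF \<Phi> pos_op_square_bound], of y]
    by (simp add: inner_diff_left power2_norm_eq_inner algebra_simps)
qed

lemma coercive_selfadjoint_map: "coercive_selfadjoint (\<Phi> A) m"
  using unital_pos_map_selfadjoint[OF \<Phi> selfadjoint] pos
    unital_pos_map_lower[OF \<Phi> selfadjoint lower]
  by unfold_locales

lemma inner_map_inverse_le:
  "inner (\<Phi> (inv A) y) y \<le> (kantorovich_const m M)\<^sup>2 * inner (inv (\<Phi> A) y) y"
proof -
  interpret X: coercive_selfadjoint "\<Phi> A" m
    by (rule coercive_selfadjoint_map)
  have "M * m * inner (\<Phi> (inv A) y) y \<le> (M + m) * (norm y)\<^sup>2 - inner (\<Phi> A y) y"
    by (rule map_inverse_bound)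
  also have "\<dots> \<le> ((M + m) / 2)\<^sup>2 * inner (inv (\<Phi> A) y) y"
    using X.tangent_le_inv[of "(M + m) / 2" y]
    by (simp only: times_divide_eq_right nonzero_mult_div_cancel_left)
  also have "((M + m) / 2)\<^sup>2 = M * m * (kantorovich_const m M)\<^sup>2"
    by (simp add: kantorovich_const_square pos pos_M)
  finally show ?thesis
    by (simp add: mult.assoc mult_le_cancel_left_pos pos pos_M)
qed

theorem map_inverse_le:
  "loewner_le (\<Phi> (op_inv A)) (\<lambda>y. (kantorovich_const m M)\<^sup>2 *\<^sub>R op_inv (\<Phi> A) y)"
proof -
  interpret X: coercive_selfadjoint "\<Phi> A" m
    by (rule coercive_selfadjoint_map)
  show ?thesis
    unfolding op_inv_def
    using inner_map_inverse_le unital_pos_map_selfadjoint[OF \<Phi> selfadjoint_inv]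
    by (simp add: loewner_le_iff_inner selfadjoint_scaleR X.selfadjoint_inv)
qed

theorem map_inverse_inner_le:
  assumes x: "norm x = 1"
  shows "inner (\<Phi> (op_inv A) x) x \<le> (kantorovich_const m M)\<^sup>2 * inverse (inner (\<Phi> A x) x)"
proof -
  define t where "t = inner (\<Phi> A x) x"
  define w where "w = inner (\<Phi> (inv A) x) x"
  have t: "m \<le> t" "t \<le> M"
    using unital_pos_map_lower[OF \<Phi> selfadjoint lower, of x]
      unital_pos_map_upper[OF \<Phi> selfadjoint upper, of x] x
    by (simp_all add: t_def)
  have "M * m * w * t \<le> ((M + m) - t) * t"
    using map_inverse_bound[of x] x t pos by (simp add: t_def w_def)
  also have "\<dots> = (M + m)\<^sup>2 / 4 - (t - (M + m) / 2)\<^sup>2"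
    by (simp add: power2_eq_square field_simps)
  also have "\<dots> \<le> ((M + m) / 2)\<^sup>2"
    by (simp add: power_divide)
  also have "\<dots> = M * m * (kantorovich_const m M)\<^sup>2"
    by (simp add: kantorovich_const_square pos pos_M)
  finally have "w * t \<le> (kantorovich_const m M)\<^sup>2"
    by (simp add: mult.assoc mult_le_cancel_left_pos pos pos_M)
  with t pos show ?thesis
    by (simp add: t_def w_def op_inv_def field_simps)
qed

theorem map_square_le:
  "loewner_le (\<Phi> (A \<circ> A)) (\<lambda>y. (kantorovich_const m M)\<^sup>2 *\<^sub>R \<Phi> A (\<Phi> A y))"
proof -
  let ?\<kappa> = "kantorovich_const m M"
  have X: "selfadjoint (\<Phi> A)"
    by (rule unital_pos_map_selfadjoint[OF \<Phi> selfadjoint])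
  have "inner (\<Phi> (A \<circ> A) y) y \<le> ?\<kappa>\<^sup>2 * inner (\<Phi> A (\<Phi> A y)) y" for y
  proof -
    define d where "d = sqrt (M * m)"
    have d: "d * d = M * m" "2 * (?\<kappa> * d) = M + m"
      using pos pos_M kantorovich_const_mult_sqrt[OF pos pos_M] by (simp_all add: d_def)
    have "0 \<le> inner (?\<kappa> *\<^sub>R \<Phi> A y - d *\<^sub>R y) (?\<kappa> *\<^sub>R \<Phi> A y - d *\<^sub>R y)"
      by simp
    also have "\<dots> =
        ?\<kappa> * ?\<kappa> * inner (\<Phi> A y) (\<Phi> A y) - 2 * (?\<kappa> * d) * inner (\<Phi> A y) y + d * d * inner y y"
      by (simp add: inner_diff_left inner_diff_right inner_commute[of y "\<Phi> A y"] algebra_simps)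
    also have "\<dots> = ?\<kappa>\<^sup>2 * inner (\<Phi> A (\<Phi> A y)) y - (M + m) * inner (\<Phi> A y) y + M * m * (norm y)\<^sup>2"
      by (simp only: d selfadjoint_inner[OF X, of "\<Phi> A y" y] power2_eq_square[of ?\<kappa>]
          power2_norm_eq_inner)
    finally show ?thesis
      using map_square_bound[of y] by simp
  qed
  then show ?thesis
    using unital_pos_map_selfadjoint[OF \<Phi> selfadjoint_square[OF selfadjoint]]
    by (simp add: loewner_le_iff_inner selfadjoint_scaleR selfadjoint_square[OF X] comp_def)
qed

theorem map_gmean_le:
  "loewner_le (gmean (\<Phi> (op_inv A)) (\<Phi> A)) (\<lambda>y. kantorovich_const m M *\<^sub>R y)"
proof -
  interpret inv: kantorovich "inv A" "1 / M" "1 / m"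
    by (rule kantorovich_inv)
  interpret X: coercive_selfadjoint "\<Phi> (inv A)" "1 / M"
    by (rule inv.coercive_selfadjoint_map[OF \<Phi>])
  have "inv (inv A) = A"
    by (rule inv_inv_eq[OF bij])
  then have "inner (\<Phi> A y) y \<le> (kantorovich_const m M)\<^sup>2 * inner (inv (\<Phi> (inv A)) y) y" for y
    using inv.inner_map_inverse_le[OF \<Phi>, of y] by (simp add: kantorovich_const_inverse pos pos_M)
  then show ?thesis
    unfolding op_inv_def
    by (intro X.gmean_le unital_pos_map_pos_op[OF \<Phi> pos_op] kantorovich_const_pos pos pos_M)
qed

end

end

theorem mainTheorem2:
  fixes A :: "'a::chilbert \<Rightarrow> 'a" and m M :: real
  assumes "A \<in> bop" and "0 < m" and "m < M"
    and "loewner_le (\<lambda>x. m *\<^sub>R x) A" and "loewner_le A (\<lambda>x. M *\<^sub>R x)"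
  defines "\<kappa> \<equiv> (M + m) / (2 * sqrt (M * m))"
  shows "let
      P1 = (\<forall>\<Phi> :: ('a \<Rightarrow> 'a) \<Rightarrow> ('b::chilbert \<Rightarrow> 'b). unital_pos_map \<Phi> \<longrightarrow>
              loewner_le (\<Phi> (op_inv A)) (\<lambda>y. \<kappa>\<^sup>2 *\<^sub>R op_inv (\<Phi> A) y));
      P2 = (\<forall>\<Phi> :: ('a \<Rightarrow> 'a) \<Rightarrow> ('b \<Rightarrow> 'b). unital_pos_map \<Phi> \<longrightarrow>
              (\<forall>x. norm x = 1 \<longrightarrow>
                 Re (cinner (\<Phi> (op_inv A) x) x) \<le> \<kappa>\<^sup>2 * inverse (Re (cinner (\<Phi> A x) x))));
      P3 = (\<forall>\<Phi> :: ('a \<Rightarrow> 'a) \<Rightarrow> ('b \<Rightarrow> 'b). unital_pos_map \<Phi> \<longrightarrow>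
              loewner_le (gmean (\<Phi> (op_inv A)) (\<Phi> A)) (\<lambda>y. \<kappa> *\<^sub>R y));
      P4 = (\<forall>\<Phi> :: ('a \<Rightarrow> 'a) \<Rightarrow> ('b \<Rightarrow> 'b). unital_pos_map \<Phi> \<longrightarrow>
              loewner_le (\<Phi> (A \<circ> A)) (\<lambda>y. \<kappa>\<^sup>2 *\<^sub>R (\<Phi> A \<circ> \<Phi> A) y))
    in (P1 \<longleftrightarrow> P2) \<and> (P1 \<longleftrightarrow> P3) \<and> (P1 \<longleftrightarrow> P4)"
proof -
  \<comment> \<open>\<open>A \<in> bop\<close> is implied by the Loewner bounds.\<close>
  have A: "selfadjoint A" "\<And>x. m * (norm x)\<^sup>2 \<le> inner (A x) x" "\<And>x. inner (A x) x \<le> M * (norm x)\<^sup>2"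
    using assms(4,5) by (simp_all add: loewner_le_scaleR_id_left loewner_le_scaleR_id_right)
  interpret kantorovich A m M
    using A assms(2,3) by unfold_locales
  have "\<kappa> = kantorovich_const m M"
    by (simp add: \<kappa>_def kantorovich_const_def)
  then show ?thesis
    by (simp add: Let_def map_inverse_le map_inverse_inner_le map_gmean_le map_square_le)
qed

end
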